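(* Let $k$ be a field of characteristic $0$ and let $\mathcal L$ be an fgc centreless Lie torus of type $(\Delta,\Lambda)$ over $k$. Then $\mathfrak h=\mathcal L_0^0$ is a maximal split toral $k$-subalgebra of $\mathcal L$.
   Context: An irreducible finite root system is a finite subset $\Delta$ of a finite-dimensional vector space with $0\in\Delta$ and $\Delta^\times:=\Delta\setminus\{0\}$ an irreducible (possibly non-reduced) root system in the usual sense; $Q=\mathrm{span}_{\mathbb Z}\Delta$, $\alpha^\vee$ coroots, $\Delta^\times_{\mathrm{ind}}=\Delta^\times\setminus2\Delta^\times$. Let $\Lambda$ be a finitely generated free abelian group. A Lie torus of type $(\Delta,\Lambda)$ is a Lie algebra $\mathcal L$ over $k$ with a $Q\times\Lambda$-grading $\mathcal L=\bigoplus\mathcal L_\alpha^\lambda$ ($\mathcal L_\alpha:=\bigoplus_\lambda\mathcal L_\alpha^\lambda$, $\mathcal L^\lambda:=\bigoplus_\alpha\mathcal L_\alpha^\lambda$) such that: (LT1) $\{\alpha:\mathcal L_\alpha\neq0\}=\Delta$; (LT2)(i) $\mathcal L_\alpha^0\neq0$ for $\alpha\in\Delta^\times_{\mathrm{ind}}$; (ii) whenever $\alpha\in\Delta^\times$ and $\mathcal L_\alpha^\lambda\ne0$ there are $e\in\mathcal L_\alpha^\lambda$, $f\in\mathcal L_{-\alpha}^{-\lambda}$ with $\mathcal L_\alpha^\lambda=ke$, $\mathcal L_{-\alpha}^{-\lambda}=kf$, $[[e,f],x]=\langle\beta,\alpha^\vee\rangle x$ for $x\in\mathcal L_\beta$,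 $\beta\in Q$; (LT3) $\mathcal L$ is generated by the $\mathcal L_\alpha$, $\alpha\in\Delta^\times$; (LT4) $\Lambda$ is generated by $\{\lambda:\mathcal L^\lambda\ne0\}$. Centroid $C=\{c\in\mathrm{End}_k\mathcal L:c[x,y]=[cx,y]=[x,cy]\}$; fgc = finitely generated as $C$-module; centreless = zero centre. A split toral $k$-subalgebra is an abelian subalgebra $\mathfrak t$ such that $\mathcal L$ has a $k$-basis of simultaneous eigenvectors of all $\mathrm{ad}(t)$, $t\in\mathfrak t$, with eigenvalues in $k$. *)

theory Defs
  imports "HOL-Analysis.Analysis" "HOL-Library.Function_Algebras"
begin

text \<open>Cartan integer (beta, alpha-coroot) = 2 (beta . alpha)/(alpha . alpha), realised for the
  Euclidean inner product of the ambient space; for beta in Q and alpha a root it is an integer.\<close>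
definition coroot_pair :: "'r::euclidean_space \<Rightarrow> 'r \<Rightarrow> int" where
  "coroot_pair \<beta> \<alpha> = \<lfloor>2 * (\<beta> \<bullet> \<alpha>) / (\<alpha> \<bullet> \<alpha>)\<rfloor>"

text \<open>Root system in the usual (Bourbaki) sense, possibly non-reduced, with respect to the
  inner product of the ambient Euclidean space.\<close>
definition root_system :: "'r::euclidean_space set \<Rightarrow> bool" where
  "root_system R \<longleftrightarrow> finite R \<and> 0 \<notin> R \<and> span R = UNIV \<and>
     (\<forall>\<alpha>\<in>R. \<forall>\<beta>\<in>R. 2 * (\<beta> \<bullet> \<alpha>) / (\<alpha> \<bullet> \<alpha>) \<in> \<int> \<and>
        \<beta> - (2 * (\<beta> \<bullet> \<alpha>) / (\<alpha> \<bullet> \<alpha>)) *\<^sub>R \<alpha> \<in> R)"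

definition irreducible_root_system :: "'r::euclidean_space set \<Rightarrow> bool" where
  "irreducible_root_system R \<longleftrightarrow> root_system R \<and> R \<noteq> {} \<and>
     \<not> (\<exists>A B. A \<noteq> {} \<and> B \<noteq> {} \<and> A \<union> B = R \<and> A \<inter> B = {} \<and>
            (\<forall>a\<in>A. \<forall>b\<in>B. a \<bullet> b = 0))"

definition irreducible_finite_root_system :: "'r::euclidean_space set \<Rightarrow> bool" where
  "irreducible_finite_root_system \<Delta> \<longleftrightarrow> 0 \<in> \<Delta> \<and> irreducible_root_system (\<Delta> - {0})"

definition int_span :: "'g::ab_group_add set \<Rightarrow> 'g set" where
  "int_span S = \<Inter>{H. 0 \<in> H \<and> S \<subseteq> H \<and> (\<forall>x\<in>H. \<forall>y\<in>H. x + y \<in> H) \<and> (\<forall>x\<in>H. - x \<in> H)}"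

text \<open>Lambda is modelled as Z^n, i.e. functions nat => int supported in {..<n}.\<close>
definition lattice_Zn :: "nat \<Rightarrow> (nat \<Rightarrow> int) set" where
  "lattice_Zn n = {f. \<forall>i\<ge>n. f i = 0}"

definition lie_algebra :: "('k::field \<Rightarrow> 'L::ab_group_add \<Rightarrow> 'L) \<Rightarrow> ('L \<Rightarrow> 'L \<Rightarrow> 'L) \<Rightarrow> bool" where
  "lie_algebra smul br \<longleftrightarrow> vector_space smul \<and>
     (\<forall>x. Vector_Spaces.linear smul smul (br x)) \<and>
     (\<forall>y. Vector_Spaces.linear smul smul (\<lambda>x. br x y)) \<and>
     (\<forall>x. br x x = 0) \<and>
     (\<forall>x y z. br x (br y z) + br y (br z x) + br z (br x y) = 0)"

definition lie_generated :: "('k::field \<Rightarrow> 'L::ab_group_add \<Rightarrow> 'L) \<Rightarrow> ('L \<Rightarrow> 'L \<Rightarrow> 'L) \<Rightarrow> 'L set \<Rightarrow> 'L set" where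
  "lie_generated smul br S = \<Inter>{M. module.subspace smul M \<and> S \<subseteq> M \<and> (\<forall>x\<in>M. \<forall>y\<in>M. br x y \<in> M)}"

definition centroid :: "('k::field \<Rightarrow> 'L::ab_group_add \<Rightarrow> 'L) \<Rightarrow> ('L \<Rightarrow> 'L \<Rightarrow> 'L) \<Rightarrow> ('L \<Rightarrow> 'L) set" where
  "centroid smul br = {c. Vector_Spaces.linear smul smul c \<and>
      (\<forall>x y. c (br x y) = br (c x) y \<and> c (br x y) = br x (c y))}"

definition fgc :: "('k::field \<Rightarrow> 'L::ab_group_add \<Rightarrow> 'L) \<Rightarrow> ('L \<Rightarrow> 'L \<Rightarrow> 'L) \<Rightarrow> bool" where
  "fgc smul br \<longleftrightarrow> (\<exists>X. finite X \<and> (\<forall>x. \<exists>c. (\<forall>y\<in>X. c y \<in> centroid smul br) \<and>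
       x = (\<Sum>y\<in>X. c y y)))"

definition centreless :: "('L::ab_group_add \<Rightarrow> 'L \<Rightarrow> 'L) \<Rightarrow> bool" where
  "centreless br \<longleftrightarrow> (\<forall>z. (\<forall>x. br z x = 0) \<longrightarrow> z = 0)"

definition split_toral :: "('k::field \<Rightarrow> 'L::ab_group_add \<Rightarrow> 'L) \<Rightarrow> ('L \<Rightarrow> 'L \<Rightarrow> 'L) \<Rightarrow> 'L set \<Rightarrow> bool" where
  "split_toral smul br T \<longleftrightarrow> module.subspace smul T \<and>
     (\<forall>a\<in>T. \<forall>b\<in>T. br a b = 0) \<and>
     (\<exists>B. \<not> module.dependent smul B \<and> module.span smul B = UNIV \<and>
          (\<forall>b\<in>B. \<forall>t\<in>T. \<exists>c. br t b = smul c b))"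

definition maximal_split_toral :: "('k::field \<Rightarrow> 'L::ab_group_add \<Rightarrow> 'L) \<Rightarrow> ('L \<Rightarrow> 'L \<Rightarrow> 'L) \<Rightarrow> 'L set \<Rightarrow> bool" where
  "maximal_split_toral smul br T \<longleftrightarrow> split_toral smul br T \<and>
     (\<forall>T'. split_toral smul br T' \<and> T \<subseteq> T' \<longrightarrow> T' = T)"

text \<open>G a l is the homogeneous component L_a^l; Q x Lambda grading.\<close>
definition QL_graded :: "('k::field \<Rightarrow> 'L::ab_group_add \<Rightarrow> 'L) \<Rightarrow> ('L \<Rightarrow> 'L \<Rightarrow> 'L) \<Rightarrow>
     'r::euclidean_space set \<Rightarrow> nat \<Rightarrow> ('r \<Rightarrow> (nat \<Rightarrow> int) \<Rightarrow> 'L set) \<Rightarrow> bool" where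
  "QL_graded smul br \<Delta> n G \<longleftrightarrow>
     (\<forall>a l. module.subspace smul (G a l)) \<and>
     (\<forall>a l. (a \<notin> int_span \<Delta> \<or> l \<notin> lattice_Zn n) \<longrightarrow> G a l = {0}) \<and>
     module.span smul (\<Union>a l. G a l) = UNIV \<and>
     (\<forall>S x. finite S \<and> (\<forall>i\<in>S. x i \<in> G (fst i) (snd i)) \<and> (\<Sum>i\<in>S. x i) = 0 \<longrightarrow>
            (\<forall>i\<in>S. x i = 0)) \<and>
     (\<forall>a l b m. \<forall>x\<in>G a l. \<forall>y\<in>G b m. br x y \<in> G (a + b) (l + m))"

definition root_space :: "('k::field \<Rightarrow> 'L::ab_group_add \<Rightarrow> 'L) \<Rightarrow> ('r \<Rightarrow> (nat \<Rightarrow> int) \<Rightarrow> 'L set) \<Rightarrow> 'r \<Rightarrow> 'L set" where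
  "root_space smul G a = module.span smul (\<Union>l. G a l)"

definition degree_space :: "('k::field \<Rightarrow> 'L::ab_group_add \<Rightarrow> 'L) \<Rightarrow> ('r \<Rightarrow> (nat \<Rightarrow> int) \<Rightarrow> 'L set) \<Rightarrow> (nat \<Rightarrow> int) \<Rightarrow> 'L set" where
  "degree_space smul G l = module.span smul (\<Union>a. G a l)"

definition lie_torus :: "('k::field \<Rightarrow> 'L::ab_group_add \<Rightarrow> 'L) \<Rightarrow> ('L \<Rightarrow> 'L \<Rightarrow> 'L) \<Rightarrow>
     'r::euclidean_space set \<Rightarrow> nat \<Rightarrow> ('r \<Rightarrow> (nat \<Rightarrow> int) \<Rightarrow> 'L set) \<Rightarrow> bool" where
  "lie_torus smul br \<Delta> n G \<longleftrightarrow>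
     lie_algebra smul br \<and> irreducible_finite_root_system \<Delta> \<and> QL_graded smul br \<Delta> n G \<and>
     \<comment> \<open>LT1\<close>
     {a. root_space smul G a \<noteq> {0}} = \<Delta> \<and>
     \<comment> \<open>LT2 (i)\<close>
     (\<forall>a\<in>\<Delta> - {0}. a \<notin> (\<lambda>x. 2 *\<^sub>R x) ` (\<Delta> - {0}) \<longrightarrow> G a 0 \<noteq> {0}) \<and>
     \<comment> \<open>LT2 (ii)\<close>
     (\<forall>a\<in>\<Delta> - {0}. \<forall>l. G a l \<noteq> {0} \<longrightarrow>
        (\<exists>e\<in>G a l. \<exists>f\<in>G (- a) (- l).
            G a l = range (\<lambda>c. smul c e) \<and> G (- a) (- l) = range (\<lambda>c. smul c f) \<and>
            (\<forall>b\<in>int_span \<Delta>. \<forall>x\<in>root_space smul G b.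
                br (br e f) x = smul (of_int (coroot_pair b a)) x))) \<and>
     \<comment> \<open>LT3\<close>
     lie_generated smul br (\<Union>a\<in>\<Delta> - {0}. root_space smul G a) = UNIV \<and>
     \<comment> \<open>LT4\<close>
     int_span {l. degree_space smul G l \<noteq> {0}} = lattice_Zn n"

end

theory Submission
  imports Defs
begin

text \<open>
  \<open>G 0 0\<close> acts on each root space by scalars: \<open>L\<close> is spanned by root vectors of nonzero roots
  and brackets \<open>[e, f]\<close> of opposite ones, and the \<open>(0,0)\<close>-component of such a bracket is a
  multiple of a coroot \<open>h\<^sub>\<alpha>\<close>, which by (LT2) acts through Cartan integers. So \<open>G 0 0\<close> is abelian
  and diagonal on any homogeneous basis.

  For maximality let \<open>t\<close> lie in a split toral \<open>T \<supseteq> G 0 0\<close>. Commuting with all \<open>h\<^sub>\<alpha>\<close> puts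
  \<open>t\<close> in root \<open>0\<close>. If \<open>t \<notin> G 0 0\<close>, the leading part of \<open>t\<close> for a coordinate functional on
  \<open>\<Lambda>\<close> in which it has positive degree is locally ad-nilpotent (since \<open>ad t\<close> is locally finite), and
  repeating this on leading parts isolates a nonzero homogeneous \<open>t0 \<in> G 0 \<lambda>\<close>, \<open>\<lambda> \<noteq> 0\<close>, with
  \<open>ad t0\<close> locally nilpotent, hence nilpotent because \<open>L\<close> is fgc. Such a \<open>t0\<close> kills every root
  vector: otherwise its last nonzero iterate \<open>y\<close> on a root vector spans a root space
  \<open>G \<alpha> \<mu>\<close>, an sl2 argument produces \<open>u\<close> with \<open>[t0, u] = h\<^sub>\<alpha>\<close>, and \<open>[ad t0, ad u] = 2\<close> on the
  \<open>2\<close>-eigenspace of \<open>h\<^sub>\<alpha>\<close> (which contains \<open>y\<close>) contradicts nilpotency of \<open>ad t0\<close>. Thus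
  \<open>t0\<close> is central, so \<open>t0 = 0\<close>, a contradiction.
\<close>

section \<open>Root systems\<close>

lemma int_span_minimal:
  "0 \<in> H \<Longrightarrow> S \<subseteq> H \<Longrightarrow> (\<forall>x\<in>H. \<forall>y\<in>H. x + y \<in> H) \<Longrightarrow> (\<forall>x\<in>H. - x \<in> H) \<Longrightarrow>
   int_span S \<subseteq> H"
  unfolding int_span_def by blast

lemma cartan_number_int_span:
  assumes R: "root_system (\<Delta> - {0})" and b: "b \<in> int_span \<Delta>" and \<alpha>: "\<alpha> \<in> \<Delta> - {0}"
  shows "2 * (b \<bullet> \<alpha>) / (\<alpha> \<bullet> \<alpha>) \<in> \<int>"
proof -
  let ?H = "{b. \<forall>\<alpha>\<in>\<Delta> - {0}. 2 * (b \<bullet> \<alpha>) / (\<alpha> \<bullet> \<alpha>) \<in> \<int>}"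
  have "int_span \<Delta> \<subseteq> ?H"
  proof (rule int_span_minimal)
    show "\<Delta> \<subseteq> ?H"
    proof
      fix x assume "x \<in> \<Delta>"
      then show "x \<in> ?H" using R unfolding root_system_def by (cases "x = 0") auto
    qed
    show "\<forall>x\<in>?H. \<forall>y\<in>?H. x + y \<in> ?H"
      by (auto simp: inner_add_left add_divide_distrib distrib_left)
    show "\<forall>x\<in>?H. - x \<in> ?H"
      by (auto simp: minus_divide_left[symmetric])
  qed simp
  then show ?thesis using b \<alpha> by blast
qed

lemma coroot_pairs_zero_imp_zero:
  assumes R: "root_system (\<Delta> - {0})" and b: "b \<in> int_span \<Delta>"
    and zero: "\<forall>\<alpha>\<in>\<Delta> - {0}. coroot_pair b \<alpha> = 0"
  shows "b = 0"
proof -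
  have "orthogonal b \<alpha>" if \<alpha>: "\<alpha> \<in> \<Delta> - {0}" for \<alpha>
  proof -
    obtain z where z: "2 * (b \<bullet> \<alpha>) / (\<alpha> \<bullet> \<alpha>) = of_int z"
      using cartan_number_int_span[OF R b \<alpha>] Ints_cases by metis
    moreover have "\<lfloor>2 * (b \<bullet> \<alpha>) / (\<alpha> \<bullet> \<alpha>)\<rfloor> = 0"
      using zero \<alpha> unfolding coroot_pair_def by simp
    ultimately have "z = 0" by simp
    then show ?thesis using z \<alpha> unfolding orthogonal_def by simp
  qed
  moreover have "span (\<Delta> - {0}) = UNIV" using R unfolding root_system_def by blast
  ultimately have "orthogonal b b" by (metis UNIV_I orthogonal_to_span)
  then show ?thesis by (simp add: orthogonal_self)
qed

lemma coroot_pair_zero_left [simp]: "coroot_pair 0 \<alpha> = 0"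
  unfolding coroot_pair_def by simp

lemma coroot_pair_self: "\<alpha> \<noteq> 0 \<Longrightarrow> coroot_pair \<alpha> \<alpha> = 2"
  unfolding coroot_pair_def by simp

lemma coroot_pair_minus_self: "\<alpha> \<noteq> 0 \<Longrightarrow> coroot_pair (- \<alpha>) \<alpha> = - 2"
  unfolding coroot_pair_def by simp

lemma finite_omits_negative_multiple:
  fixes a :: "'a::real_vector"
  assumes "finite A" "a \<noteq> 0"
  shows "\<exists>j::nat. - real (Suc j) *\<^sub>R a \<notin> A"
proof (rule ccontr)
  assume "\<not> ?thesis"
  then have "range (\<lambda>j::nat. - real (Suc j) *\<^sub>R a) \<subseteq> A" by blast
  moreover have "inj (\<lambda>j::nat. - real (Suc j) *\<^sub>R a)"
    by (rule injI) (use assms(2) in \<open>simp add: scaleR_cancel_right\<close>)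
  ultimately show False
    using assms(1) finite_imageD finite_subset infinite_UNIV_nat by blast
qed

section \<open>Lie algebras\<close>

locale lie_alg =
  fixes smul :: "'k::field \<Rightarrow> 'L::ab_group_add \<Rightarrow> 'L" and br :: "'L \<Rightarrow> 'L \<Rightarrow> 'L"
  assumes lie: "lie_algebra smul br"
begin

sublocale V: vector_space smul
  using lie unfolding lie_algebra_def by blast

lemma linear_bracket_right: "Vector_Spaces.linear smul smul (br x)"
  using lie unfolding lie_algebra_def by blast

lemma linear_bracket_left: "Vector_Spaces.linear smul smul (\<lambda>x. br x y)"
  using lie unfolding lie_algebra_def by blast

lemma bracket_add_right: "br x (y + z) = br x y + br x z"
  using linear_bracket_right[of x] unfolding Vector_Spaces.linear_iff by simp

lemma bracket_add_left: "br (x + y) z = br x z + br y z"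
  using linear_bracket_left[of z] unfolding Vector_Spaces.linear_iff by simp

lemma bracket_scale_right: "br x (smul c y) = smul c (br x y)"
  using linear_bracket_right[of x] unfolding Vector_Spaces.linear_iff by simp

lemma bracket_scale_left: "br (smul c x) y = smul c (br x y)"
  using linear_bracket_left[of y] unfolding Vector_Spaces.linear_iff by simp

lemma bracket_zero_right [simp]: "br x 0 = 0"
  using bracket_add_right[of x 0 0] by simp

lemma bracket_zero_left [simp]: "br 0 x = 0"
  using bracket_add_left[of 0 0 x] by simp

lemma bracket_minus_right: "br x (- y) = - br x y"
  using bracket_add_right[of x y "- y"] by (simp add: minus_unique)

lemma bracket_minus_left: "br (- x) y = - br x y"
  using bracket_add_left[of x "- x" y] by (simp add: minus_unique)

lemma bracket_diff_right: "br x (y - z) = br x y - br x z"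
  using bracket_add_right[of x y "- z"] bracket_minus_right[of x z] by simp

lemma bracket_diff_left: "br (x - y) z = br x z - br y z"
  using bracket_add_left[of x "- y" z] bracket_minus_left[of y z] by simp

lemma bracket_sum_right: "br x (sum f S) = (\<Sum>i\<in>S. br x (f i))"
  by (induction S rule: infinite_finite_induct) (auto simp: bracket_add_right)

lemma bracket_sum_left: "br (sum f S) y = (\<Sum>i\<in>S. br (f i) y)"
  by (induction S rule: infinite_finite_induct) (auto simp: bracket_add_left)

lemma bracket_self [simp]: "br x x = 0"
  using lie unfolding lie_algebra_def by blast

lemma bracket_antisym: "br x y = - br y x"
proof -
  have "0 = br x (x + y) + br y (x + y)" using bracket_add_left[of x y "x + y"] by simp
  also have "\<dots> = br x y + br y x" by (simp add: bracket_add_right)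
  finally have "br y x + br x y = 0" by (simp add: add.commute)
  then show ?thesis by (rule minus_unique[symmetric])
qed

lemma jacobi: "br a (br b c) = br (br a b) c + br b (br a c)"
proof -
  have "br a (br b c) + br b (br c a) + br c (br a b) = 0"
    using lie unfolding lie_algebra_def by blast
  moreover have "br b (br c a) = - br b (br a c)" by (metis bracket_antisym bracket_minus_right)
  moreover have "br c (br a b) = - br (br a b) c" by (metis bracket_antisym)
  ultimately show ?thesis by (simp add: algebra_simps eq_neg_iff_add_eq_0)
qed

lemma subspace_kernel_ad: "V.subspace {z. br t z = 0}"
  by (rule V.subspaceI) (auto simp: bracket_add_right bracket_scale_right)

lemma lie_generated_minimal:
  "V.subspace M \<Longrightarrow> S \<subseteq> M \<Longrightarrow> (\<forall>x\<in>M. \<forall>y\<in>M. br x y \<in> M) \<Longrightarrow> lie_generated smul br S \<subseteq> M"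
  unfolding lie_generated_def by blast

lemma ad_vanishes_on_lie_generated:
  assumes "\<forall>x\<in>S. br t x = 0" "z \<in> lie_generated smul br S"
  shows "br t z = 0"
proof -
  have "lie_generated smul br S \<subseteq> {z. br t z = 0}"
    by (rule lie_generated_minimal[OF subspace_kernel_ad])
      (use assms(1) jacobi[of t] in auto)
  then show ?thesis using assms(2) by blast
qed

lemma ad_pow_zero [simp]: "(br t ^^ k) 0 = 0"
  by (induction k) auto

lemma ad_pow_add: "(br t ^^ k) (x + y) = (br t ^^ k) x + (br t ^^ k) y"
  by (induction k) (auto simp: bracket_add_right)

lemma ad_pow_scale: "(br t ^^ k) (smul c x) = smul c ((br t ^^ k) x)"
  by (induction k) (auto simp: bracket_scale_right)

lemma ad_pow_diff: "(br t ^^ k) (x - y) = (br t ^^ k) x - (br t ^^ k) y"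
  by (induction k) (auto simp: bracket_diff_right)

lemma ad_pow_sum: "(br t ^^ k) (sum f S) = (\<Sum>i\<in>S. (br t ^^ k) (f i))"
  by (induction S rule: infinite_finite_induct) (auto simp: ad_pow_add)

lemma ad_pow_Suc_right: "(br t ^^ Suc k) x = (br t ^^ k) (br t x)"
  by (simp add: funpow_Suc_right del: funpow.simps)

lemma ad_pow_vanish_mono:
  assumes "(br t ^^ k) x = 0" "k \<le> m"
  shows "(br t ^^ m) x = 0"
proof -
  obtain d where "m = d + k" using assms(2) le_add_diff_inverse2 by metis
  then show ?thesis using assms(1) by (simp add: funpow_add)
qed

lemma ad_pow_common_exponent:
  assumes "finite X" "\<forall>y\<in>X. \<exists>N. (br t ^^ N) y = 0"
  shows "\<exists>N. \<forall>y\<in>X. (br t ^^ N) y = 0"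
  using assms
proof (induction X rule: finite_induct)
  case (insert y X)
  obtain N1 where "(br t ^^ N1) y = 0" using insert by blast
  moreover obtain N2 where "\<forall>y\<in>X. (br t ^^ N2) y = 0" using insert by blast
  ultimately have "\<forall>z\<in>insert y X. (br t ^^ (N1 + N2)) z = 0"
    using ad_pow_vanish_mono by (metis insert_iff le_add1 le_add2)
  then show ?case by blast
qed simp

lemma ad_pow_vanish_sum:
  assumes "finite S" "\<forall>i\<in>S. \<exists>N. (br t ^^ N) (f i) = 0"
  shows "\<exists>N. (br t ^^ N) (sum f S) = 0"
proof -
  obtain N where "\<forall>y\<in>f ` S. (br t ^^ N) y = 0"
    using ad_pow_common_exponent[of "f ` S" t] assms by blast
  then show ?thesis unfolding ad_pow_sum by (intro exI[of _ N] sum.neutral) auto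
qed

lemma last_nonzero_ad_iterate:
  assumes "(br t ^^ N) x = 0" "br t x \<noteq> 0"
  shows "\<exists>k. br t ((br t ^^ k) x) \<noteq> 0 \<and> br t (br t ((br t ^^ k) x)) = 0"
proof -
  define j where "j = (LEAST j. br t (br t ((br t ^^ j) x)) = 0)"
  have "br t (br t ((br t ^^ j) x)) = 0"
    unfolding j_def by (rule LeastI[of _ N]) (simp add: assms(1))
  moreover have "br t ((br t ^^ j) x) \<noteq> 0"
  proof (cases j)
    case 0
    then show ?thesis using assms(2) by simp
  next
    case (Suc i)
    have "\<not> br t (br t ((br t ^^ i) x)) = 0"
      by (rule not_less_Least) (simp add: Suc j_def[symmetric])
    then show ?thesis using Suc by simp
  qed
  ultimately show ?thesis by blast
qed

definition ad_locally_nilpotent :: "'L \<Rightarrow> bool" where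
  "ad_locally_nilpotent t \<longleftrightarrow> (\<forall>x. \<exists>N. (br t ^^ N) x = 0)"

lemma centroid_commutes_ad_pow:
  assumes "c \<in> centroid smul br"
  shows "(br t ^^ N) (c z) = c ((br t ^^ N) z)"
proof -
  have "c (br t w) = br t (c w)" for w using assms unfolding centroid_def by blast
  then show ?thesis by (induction N) auto
qed

lemma centroid_zero:
  assumes "c \<in> centroid smul br"
  shows "c 0 = 0"
  using assms unfolding centroid_def Vector_Spaces.linear_iff_module_hom by (blast intro: module_hom.zero)

text \<open>Centroid elements commute with \<open>ad t\<close>, so an exponent killing the finitely many generators
  over the centroid kills everything.\<close>
lemma fgc_ad_locally_nilpotent_imp_nilpotent:
  assumes "fgc smul br" "ad_locally_nilpotent t"
  shows "\<exists>N. \<forall>x. (br t ^^ N) x = 0"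
proof -
  obtain X where X: "finite X" "\<forall>x. \<exists>c. (\<forall>y\<in>X. c y \<in> centroid smul br) \<and> x = (\<Sum>y\<in>X. c y y)"
    using assms(1) unfolding fgc_def by blast
  obtain N where N: "\<forall>y\<in>X. (br t ^^ N) y = 0"
    using ad_pow_common_exponent[OF X(1)] assms(2) unfolding ad_locally_nilpotent_def by blast
  have "(br t ^^ N) x = 0" for x
  proof -
    obtain c where c: "\<forall>y\<in>X. c y \<in> centroid smul br" "x = (\<Sum>y\<in>X. c y y)" using X(2) by blast
    have "(br t ^^ N) x = (\<Sum>y\<in>X. (br t ^^ N) (c y y))" unfolding c(2) by (rule ad_pow_sum)
    also have "\<dots> = (\<Sum>y\<in>X. c y ((br t ^^ N) y))" using centroid_commutes_ad_pow c(1) by simp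
    also have "\<dots> = 0" using N centroid_zero c(1) by (intro sum.neutral) simp
    finally show ?thesis .
  qed
  then show ?thesis by blast
qed

lemma ad_invariant_span_eigenvectors:
  assumes "\<forall>b\<in>F. \<exists>c. br t b = smul c b" "w \<in> V.span F"
  shows "br t w \<in> V.span F"
proof -
  have "V.subspace {w. br t w \<in> V.span F}"
    by (rule V.subspaceI) (auto simp: bracket_add_right bracket_scale_right V.span_zero V.span_add V.span_scale)
  moreover have "F \<subseteq> {w. br t w \<in> V.span F}"
  proof
    fix b assume b: "b \<in> F"
    then obtain c where "br t b = smul c b" using assms(1) by blast
    then show "b \<in> {w. br t w \<in> V.span F}" using b by (simp add: V.span_scale V.span_base)
  qed
  ultimately show ?thesis using V.span_minimal assms(2) by blast
qed

text \<open>Induction on the eigenvectors: for an eigenvector \<open>b\<close> of eigenvalue \<open>\<epsilon>\<close>, the vector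
  \<open>[t, x] - \<epsilon> x\<close> lies in the span of the remaining ones, and its iterates are combinations
  of iterates of \<open>x\<close>.\<close>
lemma ad_eigenvectors_locally_finite:
  assumes eig: "\<forall>b\<in>B. \<exists>c. br t b = smul c b"
  shows "finite F \<Longrightarrow> F \<subseteq> B \<Longrightarrow> x \<in> V.span F \<Longrightarrow>
    \<exists>J. (br t ^^ J) x \<in> V.span {(br t ^^ j) x | j. j < J}"
proof (induction F arbitrary: x rule: finite_induct)
  case empty
  then show ?case by (intro exI[of _ 0]) simp
next
  case (insert b F)
  obtain \<epsilon> where eb: "br t b = smul \<epsilon> b" using eig insert by blast
  obtain k where y: "x - smul k b \<in> V.span F" using insert.prems V.span_breakdown_eq by blast
  have inv: "br t w \<in> V.span F" if "w \<in> V.span F" for w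
    using ad_invariant_span_eigenvectors[of F t] eig insert.prems that by blast
  define z where "z = br t x - smul \<epsilon> x"
  have "z = br t (x - smul k b) - smul \<epsilon> (x - smul k b)"
    unfolding z_def by (simp add: bracket_diff_right bracket_scale_right eb V.scale_right_diff_distrib)
  then have "z \<in> V.span F" using y inv by (simp add: V.span_diff V.span_scale)
  then obtain J where J: "(br t ^^ J) z \<in> V.span {(br t ^^ j) z | j. j < J}"
    using insert.IH insert.prems by blast
  have Tz: "(br t ^^ j) z = (br t ^^ Suc j) x - smul \<epsilon> ((br t ^^ j) x)" for j
    unfolding z_def by (simp add: ad_pow_diff ad_pow_scale funpow_swap1)
  let ?S = "V.span {(br t ^^ j) x | j. j < Suc J}"
  have iterate: "(br t ^^ j) x \<in> ?S" if "j \<le> J" for j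
    using that by (intro V.span_base) auto
  have "V.span {(br t ^^ j) z | j. j < J} \<subseteq> ?S"
  proof (rule V.span_minimal, clarify)
    fix j assume "j < J"
    then show "(br t ^^ j) z \<in> ?S"
      unfolding Tz by (intro V.span_diff V.span_scale iterate) simp_all
  qed simp
  then have "(br t ^^ J) z + smul \<epsilon> ((br t ^^ J) x) \<in> ?S"
    using J iterate by (blast intro: V.span_add V.span_scale)
  then have "(br t ^^ Suc J) x \<in> ?S" using Tz[of J] by simp
  then show ?case by blast
qed

lemma split_toral_ad_locally_finite:
  assumes "split_toral smul br T" "t \<in> T"
  shows "\<exists>J. (br t ^^ J) x \<in> V.span {(br t ^^ j) x | j. j < J}"
proof -
  obtain B where B: "V.span B = UNIV" "\<forall>b\<in>B. \<forall>t\<in>T. \<exists>c. br t b = smul c b"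
    using assms(1) unfolding split_toral_def by blast
  have eig: "\<forall>b\<in>B. \<exists>c. br t b = smul c b" using B(2) assms(2) by blast
  have "x \<in> V.span B" using B(1) by simp
  then obtain F r where F: "finite F" "F \<subseteq> B" "x = (\<Sum>a\<in>F. smul (r a) a)"
    unfolding V.span_explicit by blast
  have "x \<in> V.span F" unfolding F(3) by (intro V.span_sum V.span_scale V.span_base)
  then show ?thesis using ad_eigenvectors_locally_finite[OF eig F(1,2)] by blast
qed

end

lemma minus_two_neq_of_nat: "(- 2 :: 'k::field_char_0) \<noteq> of_nat j"
proof
  assume "(- 2 :: 'k) = of_nat j"
  then have "(of_nat (j + 2) :: 'k) = 0" by simp
  then show False by (simp only: of_nat_eq_0_iff)
qed

locale lie_alg_char_0 = lie_alg smul br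
  for smul :: "'k::field_char_0 \<Rightarrow> 'L::ab_group_add \<Rightarrow> 'L" and br
begin

text \<open>The standard sl2 computation: if \<open>v\<close> is killed by \<open>e\<close>, the \<open>f\<close>-string through \<open>v\<close>
  can only terminate when the \<open>h\<close>-weight of \<open>v\<close> is a natural number.\<close>
lemma sl2_highest_weight_vector_eq_0:
  assumes ef: "br e f = h" and hf: "br h f = smul (- 2) f" and hv: "br h v = smul m v"
    and ev: "br e v = 0" and K: "(br f ^^ K) v = 0" and m: "\<forall>j::nat. m \<noteq> of_nat j"
  shows "v = 0"
proof -
  have weight: "br h ((br f ^^ j) v) = smul (m - 2 * of_nat j) ((br f ^^ j) v)" for j
  proof (induction j)
    case (Suc j)
    have "br h ((br f ^^ Suc j) v) = br (br h f) ((br f ^^ j) v) + br f (br h ((br f ^^ j) v))"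
      unfolding funpow.simps comp_apply by (rule jacobi)
    also have "\<dots> = smul (- 2) ((br f ^^ Suc j) v) + smul (m - 2 * of_nat j) ((br f ^^ Suc j) v)"
      using Suc by (simp add: hf bracket_scale_left bracket_scale_right bracket_minus_left)
    also have "\<dots> = smul (- 2 + (m - 2 * of_nat j)) ((br f ^^ Suc j) v)"
      by (simp only: V.scale_left_distrib)
    finally show ?case by (simp add: algebra_simps)
  qed (simp add: hv)
  have raise: "br e ((br f ^^ Suc j) v) = smul (of_nat (Suc j) * (m - of_nat j)) ((br f ^^ j) v)" for j
  proof (induction j)
    case 0
    have "br e (br f v) = br (br e f) v + br f (br e v)" by (rule jacobi)
    then show ?case using ef hv ev by simp
  next
    case (Suc j)
    let ?w = "(br f ^^ Suc j) v"
    have "br e ((br f ^^ Suc (Suc j)) v) = br (br e f) ?w + br f (br e ?w)"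
      unfolding funpow.simps comp_apply by (rule jacobi)
    also have "\<dots> = smul ((m - 2 * of_nat (Suc j)) + of_nat (Suc j) * (m - of_nat j)) ?w"
      using Suc weight[of "Suc j"] ef by (simp add: bracket_scale_right V.scale_left_distrib)
    finally show ?case by (simp add: algebra_simps)
  qed
  have "(br f ^^ j) v = 0" if "j \<le> K" for j
    using that
  proof (induction j rule: inc_induct)
    case (step j)
    have "smul (of_nat (Suc j) * (m - of_nat j)) ((br f ^^ j) v) = 0"
      using raise[of j] step.IH by simp
    moreover have "of_nat (Suc j) * (m - of_nat j) \<noteq> (0::'k)"
      using m by (simp del: of_nat_Suc)
    ultimately show ?case by simp
  qed (rule K)
  from this[of 0] show ?thesis by simp
qed

text \<open>If \<open>[ad a, ad b] = c \<noteq> 0\<close> on \<open>W\<close> then \<open>[(ad a)\<^sup>k\<^sup>+\<^sup>1, ad b] = (k+1) c (ad a)\<^sup>k\<close>,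
  so nilpotency of \<open>ad a\<close> propagates down to \<open>(ad a)\<^sup>0\<close>.\<close>
lemma commutator_scalar_ad_nilpotent_eq_0:
  assumes comm: "\<And>v. v \<in> W \<Longrightarrow> br a (br b v) = br b (br a v) + smul c v"
    and inv_a: "\<And>v. v \<in> W \<Longrightarrow> br a v \<in> W" and inv_b: "\<And>v. v \<in> W \<Longrightarrow> br b v \<in> W"
    and nil: "\<And>v. v \<in> W \<Longrightarrow> (br a ^^ N) v = 0" and c: "c \<noteq> 0" and v: "v \<in> W"
  shows "v = 0"
proof -
  have commute_pow: "(br a ^^ Suc k) (br b v) =
      br b ((br a ^^ Suc k) v) + smul (of_nat (Suc k) * c) ((br a ^^ k) v)" if "v \<in> W" for k v
    using that
  proof (induction k arbitrary: v)
    case (Suc k)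
    have "(br a ^^ Suc (Suc k)) (br b v) = (br a ^^ Suc k) (br a (br b v))"
      by (rule ad_pow_Suc_right)
    also have "\<dots> = (br a ^^ Suc k) (br b (br a v)) + smul c ((br a ^^ Suc k) v)"
      using comm[OF Suc.prems] by (simp only: ad_pow_add ad_pow_scale)
    also have "\<dots> = br b ((br a ^^ Suc (Suc k)) v)
        + smul (of_nat (Suc k) * c + c) ((br a ^^ Suc k) v)"
      using Suc.IH[OF inv_a[OF Suc.prems]]
      by (simp only: ad_pow_Suc_right[symmetric] add.assoc V.scale_left_distrib)
    finally show ?case by (simp add: algebra_simps)
  qed (use comm in simp)
  have "\<forall>v\<in>W. (br a ^^ j) v = 0" if "j \<le> N" for j
    using that
  proof (induction j rule: inc_induct)
    case (step k)
    show ?case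
    proof
      fix v assume v: "v \<in> W"
      have "smul (of_nat (Suc k) * c) ((br a ^^ k) v) = 0"
        using commute_pow[OF v, of k] step.IH v inv_b by simp
      moreover have "of_nat (Suc k) * c \<noteq> 0" using c by (simp del: of_nat_Suc)
      ultimately show "(br a ^^ k) v = 0" by simp
    qed
  qed (use nil in blast)
  from this[of 0] show ?thesis using v by simp
qed

end

section \<open>Graded Lie algebras\<close>

lemma sum_restrict_to_subset:
  assumes "finite T" "S \<subseteq> T"
  shows "(\<Sum>i\<in>T. if i \<in> S then c i else 0) = sum c S"
  using sum.inter_restrict[OF assms(1), of c S] assms(2) by (simp add: Int_absorb1)

locale graded_lie = lie_alg smul br
  for smul :: "'k::field \<Rightarrow> 'L::ab_group_add \<Rightarrow> 'L" and br +
  fixes \<Delta> :: "'r::euclidean_space set" and n :: nat and G :: "'r \<Rightarrow> (nat \<Rightarrow> int) \<Rightarrow> 'L set"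
  assumes graded: "QL_graded smul br \<Delta> n G"
begin

lemma G_subspace: "V.subspace (G a l)"
  using graded unfolding QL_graded_def by (elim conjE) simp

lemma G_trivial: "a \<notin> int_span \<Delta> \<or> l \<notin> lattice_Zn n \<Longrightarrow> G a l = {0}"
  using graded unfolding QL_graded_def by (elim conjE) simp

lemma G_bracket: "x \<in> G a l \<Longrightarrow> y \<in> G b m \<Longrightarrow> br x y \<in> G (a + b) (l + m)"
  using graded unfolding QL_graded_def by (elim conjE) simp

lemma G_independent:
  "finite S \<Longrightarrow> \<forall>i\<in>S. x i \<in> G (fst i) (snd i) \<Longrightarrow> sum x S = 0 \<Longrightarrow> i \<in> S \<Longrightarrow> x i = 0"
proof -
  have "\<forall>S x. finite S \<and> (\<forall>i\<in>S. x i \<in> G (fst i) (snd i)) \<and> (\<Sum>i\<in>S. x i) = 0 \<longrightarrow>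
      (\<forall>i\<in>S. x i = 0)"
    using graded unfolding QL_graded_def by (elim conjE)
  then show "finite S \<Longrightarrow> \<forall>i\<in>S. x i \<in> G (fst i) (snd i) \<Longrightarrow> sum x S = 0 \<Longrightarrow> i \<in> S \<Longrightarrow> x i = 0"
    by blast
qed

lemma G_spanning: "V.span (\<Union>a l. G a l) = UNIV"
  using graded unfolding QL_graded_def by (elim conjE)

lemma G_zero [simp]: "0 \<in> G a l"
  using V.subspace_0[OF G_subspace] .

lemma G_add: "x \<in> G a l \<Longrightarrow> y \<in> G a l \<Longrightarrow> x + y \<in> G a l"
  using V.subspace_add[OF G_subspace] .

lemma G_scale: "x \<in> G a l \<Longrightarrow> smul c x \<in> G a l"
  using V.subspace_scale[OF G_subspace] .

lemma G_diff: "x \<in> G a l \<Longrightarrow> y \<in> G a l \<Longrightarrow> x - y \<in> G a l"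
  using V.subspace_diff[OF G_subspace] .

lemma G_subset_root_space: "x \<in> G a l \<Longrightarrow> x \<in> root_space smul G a"
  unfolding root_space_def by (rule V.span_base) blast

lemma ad_pow_zero_root_homogeneous:
  assumes "t \<in> G 0 \<mu>" "x \<in> G a l"
  shows "\<exists>l'. (br t ^^ j) x \<in> G a l'"
proof (induction j)
  case (Suc j)
  then obtain l' where "(br t ^^ j) x \<in> G a l'" by blast
  then have "br t ((br t ^^ j) x) \<in> G (0 + a) (\<mu> + l')" by (rule G_bracket[OF assms(1)])
  then show ?case by auto
qed (use assms(2) in auto)

definition homogeneous_decomp :: "'L \<Rightarrow> ('r \<times> (nat \<Rightarrow> int)) set \<Rightarrow> ('r \<times> (nat \<Rightarrow> int) \<Rightarrow> 'L) \<Rightarrow> bool"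
  where "homogeneous_decomp x S c \<longleftrightarrow> finite S \<and> (\<forall>i\<in>S. c i \<in> G (fst i) (snd i)) \<and> x = sum c S"

lemma homogeneous_decomp_exists: "\<exists>S c. homogeneous_decomp x S c"
proof -
  let ?P = "{x. \<exists>S c. homogeneous_decomp x S c}"
  have "V.subspace ?P"
  proof (rule V.subspaceI)
    show "0 \<in> ?P" by (auto simp: homogeneous_decomp_def intro!: exI[of _ "{}"])
  next
    fix x y assume "x \<in> ?P" "y \<in> ?P"
    then obtain S c S' c' where d: "homogeneous_decomp x S c" "homogeneous_decomp y S' c'" by blast
    define c'' where "c'' i = (if i \<in> S then c i else 0) + (if i \<in> S' then c' i else 0)" for i
    have "homogeneous_decomp (x + y) (S \<union> S') c''"
      using d unfolding homogeneous_decomp_def c''_def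
      by (auto simp: sum.distrib sum_restrict_to_subset intro!: G_add)
    then show "x + y \<in> ?P" by blast
  next
    fix k x assume "x \<in> ?P"
    then obtain S c where "homogeneous_decomp x S c" by blast
    then have "homogeneous_decomp (smul k x) S (\<lambda>i. smul k (c i))"
      unfolding homogeneous_decomp_def by (auto simp: V.scale_sum_right intro!: G_scale)
    then show "smul k x \<in> ?P" by blast
  qed
  moreover have "(\<Union>a l. G a l) \<subseteq> ?P"
  proof
    fix x assume "x \<in> (\<Union>a l. G a l)"
    then obtain a l where "x \<in> G a l" by blast
    then have "homogeneous_decomp x {(a, l)} (\<lambda>_. x)" unfolding homogeneous_decomp_def by auto
    then show "x \<in> ?P" by blast
  qed
  ultimately have "V.span (\<Union>a l. G a l) \<subseteq> ?P" by (rule V.span_minimal[rotated])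
  then show ?thesis using G_spanning by blast
qed

lemma homogeneous_decomp_unique:
  assumes "homogeneous_decomp x S c" "homogeneous_decomp x S' c'"
  shows "(if i \<in> S then c i else 0) = (if i \<in> S' then c' i else 0)"
proof -
  define d where "d j = (if j \<in> S then c j else 0) - (if j \<in> S' then c' j else 0)" for j
  have fin: "finite (S \<union> S')" using assms unfolding homogeneous_decomp_def by auto
  have "sum d (S \<union> S') = sum c S - sum c' S'"
    unfolding d_def using fin by (simp add: sum_subtractf sum_restrict_to_subset)
  also have "\<dots> = 0" using assms unfolding homogeneous_decomp_def by simp
  finally have "sum d (S \<union> S') = 0" .
  moreover have "d j \<in> G (fst j) (snd j)" if "j \<in> S \<union> S'" for j
    unfolding d_def by (rule G_diff) (use assms in \<open>auto simp: homogeneous_decomp_def\<close>)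
  ultimately have "\<forall>j\<in>S \<union> S'. d j = 0" using G_independent[OF fin] by blast
  then show ?thesis unfolding d_def by (cases "i \<in> S \<union> S'") auto
qed

definition hcomp :: "'r \<times> (nat \<Rightarrow> int) \<Rightarrow> 'L \<Rightarrow> 'L" where
  "hcomp i x = (THE y. \<exists>S c. homogeneous_decomp x S c \<and> y = (if i \<in> S then c i else 0))"

lemma hcomp_eq:
  assumes "homogeneous_decomp x S c"
  shows "hcomp i x = (if i \<in> S then c i else 0)"
  unfolding hcomp_def
proof (rule the_equality)
  show "\<exists>S' c'. homogeneous_decomp x S' c' \<and> (if i \<in> S then c i else 0) = (if i \<in> S' then c' i else 0)"
    using assms by blast
qed (use homogeneous_decomp_unique[OF assms] in metis)

lemma hcomp_in_G: "hcomp i x \<in> G (fst i) (snd i)"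
proof -
  obtain S c where d: "homogeneous_decomp x S c" using homogeneous_decomp_exists by blast
  show ?thesis using hcomp_eq[OF d] d unfolding homogeneous_decomp_def by auto
qed

definition hsupp :: "'L \<Rightarrow> ('r \<times> (nat \<Rightarrow> int)) set" where
  "hsupp x = {i. hcomp i x \<noteq> 0}"

lemma finite_hsupp: "finite (hsupp x)"
proof -
  obtain S c where d: "homogeneous_decomp x S c" using homogeneous_decomp_exists by blast
  have "hsupp x \<subseteq> S" using hcomp_eq[OF d] unfolding hsupp_def by auto
  then show ?thesis using d unfolding homogeneous_decomp_def by (auto intro: finite_subset)
qed

lemma sum_hcomp:
  assumes "finite T" "hsupp x \<subseteq> T"
  shows "x = (\<Sum>i\<in>T. hcomp i x)"
proof -
  obtain S c where d: "homogeneous_decomp x S c" using homogeneous_decomp_exists by blast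
  have fS: "finite S" using d unfolding homogeneous_decomp_def by auto
  have "x = (\<Sum>i\<in>S. hcomp i x)" using d hcomp_eq[OF d] unfolding homogeneous_decomp_def by simp
  also have "\<dots> = (\<Sum>i\<in>S \<union> T. hcomp i x)"
    by (rule sum.mono_neutral_right[symmetric]) (use fS assms hcomp_eq[OF d] in \<open>auto simp: hsupp_def\<close>)
  also have "\<dots> = (\<Sum>i\<in>T. hcomp i x)"
    by (rule sum.mono_neutral_left[symmetric]) (use fS assms in \<open>auto simp: hsupp_def\<close>)
  finally show ?thesis .
qed

lemma sum_hcomp_hsupp: "x = (\<Sum>i\<in>hsupp x. hcomp i x)"
  by (rule sum_hcomp[OF finite_hsupp subset_refl])

lemma hcomp_sum_homogeneous:
  assumes "finite S" "\<forall>i\<in>S. c i \<in> G (fst i) (snd i)"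
  shows "hcomp j (sum c S) = (if j \<in> S then c j else 0)"
  by (rule hcomp_eq) (use assms in \<open>auto simp: homogeneous_decomp_def\<close>)

lemma hcomp_homogeneous:
  assumes "x \<in> G a l"
  shows "hcomp i x = (if i = (a, l) then x else 0)"
  using hcomp_sum_homogeneous[of "{(a, l)}" "\<lambda>_. x" i] assms by auto

lemma hcomp_add: "hcomp i (x + y) = hcomp i x + hcomp i y"
proof -
  let ?T = "hsupp x \<union> hsupp y"
  have f: "finite ?T" using finite_hsupp by auto
  have e: "x + y = (\<Sum>j\<in>?T. hcomp j x + hcomp j y)"
    using sum_hcomp[OF f, of x, symmetric] sum_hcomp[OF f, of y, symmetric] by (simp add: sum.distrib)
  have "\<forall>j\<in>?T. hcomp j x + hcomp j y \<in> G (fst j) (snd j)"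
    using hcomp_in_G G_add by blast
  then have "hcomp i (x + y) = (if i \<in> ?T then hcomp i x + hcomp i y else 0)"
    unfolding e by (rule hcomp_sum_homogeneous[OF f])
  then show ?thesis by (auto simp: hsupp_def)
qed

lemma hcomp_scale: "hcomp i (smul k x) = smul k (hcomp i x)"
proof -
  have "smul k x = smul k (\<Sum>j\<in>hsupp x. hcomp j x)" by (rule arg_cong[OF sum_hcomp_hsupp])
  then have e: "smul k x = (\<Sum>j\<in>hsupp x. smul k (hcomp j x))" by (simp add: V.scale_sum_right)
  have "\<forall>j\<in>hsupp x. smul k (hcomp j x) \<in> G (fst j) (snd j)"
    using hcomp_in_G G_scale by blast
  then have "hcomp i (smul k x) = (if i \<in> hsupp x then smul k (hcomp i x) else 0)"
    unfolding e by (rule hcomp_sum_homogeneous[OF finite_hsupp])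
  then show ?thesis by (auto simp: hsupp_def)
qed

lemma hcomp_zero [simp]: "hcomp i 0 = 0"
  using hcomp_scale[of i 0 0] by simp

lemma hcomp_diff: "hcomp i (x - y) = hcomp i x - hcomp i y"
proof -
  have "hcomp i (x - y) + hcomp i y = hcomp i x" using hcomp_add[of i "x - y" y] by simp
  then show ?thesis by (simp add: eq_diff_eq)
qed

lemma hcomp_sum: "hcomp i (sum f S) = (\<Sum>j\<in>S. hcomp i (f j))"
  by (induction S rule: infinite_finite_induct) (auto simp: hcomp_add)

lemma hcomp_eq_0_imp_zero:
  assumes "\<And>i. hcomp i x = 0"
  shows "x = 0"
proof -
  have "x = (\<Sum>i\<in>hsupp x. hcomp i x)" by (rule sum_hcomp_hsupp)
  also have "\<dots> = 0" using assms by simp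
  finally show ?thesis .
qed

lemma hsupp_eq_empty_iff [simp]: "hsupp t = {} \<longleftrightarrow> t = 0"
  unfolding hsupp_def using hcomp_eq_0_imp_zero by auto

lemma hsupp_subset_singleton_imp_G:
  assumes "hsupp t \<subseteq> {i}"
  shows "t \<in> G (fst i) (snd i)"
proof -
  from sum_hcomp[of "{i}" t] assms have "t = hcomp i t" by simp
  then show ?thesis using hcomp_in_G[of i t] by metis
qed

lemma bracket_hcomp: "br x y = (\<Sum>i\<in>hsupp x. \<Sum>j\<in>hsupp y. br (hcomp i x) (hcomp j y))"
proof -
  have "br x y = br (\<Sum>i\<in>hsupp x. hcomp i x) (\<Sum>j\<in>hsupp y. hcomp j y)"
    by (rule arg_cong2[where f = br, OF sum_hcomp_hsupp sum_hcomp_hsupp])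
  then show ?thesis unfolding bracket_sum_left by (simp only: bracket_sum_right)
qed

lemma hcomp_bracket_diagonal:
  assumes "\<And>i. br s (hcomp i t) = smul (\<phi> (fst i)) (hcomp i t)"
  shows "hcomp i (br s t) = smul (\<phi> (fst i)) (hcomp i t)"
proof -
  have "br s t = br s (\<Sum>j\<in>hsupp t. hcomp j t)" by (rule arg_cong[OF sum_hcomp_hsupp])
  also have "\<dots> = (\<Sum>j\<in>hsupp t. smul (\<phi> (fst j)) (hcomp j t))"
    by (simp add: bracket_sum_right assms)
  finally have e: "br s t = (\<Sum>j\<in>hsupp t. smul (\<phi> (fst j)) (hcomp j t))" .
  have "\<forall>j\<in>hsupp t. smul (\<phi> (fst j)) (hcomp j t) \<in> G (fst j) (snd j)"
    using hcomp_in_G G_scale by blast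
  then have "hcomp i (br s t) = (if i \<in> hsupp t then smul (\<phi> (fst i)) (hcomp i t) else 0)"
    unfolding e by (rule hcomp_sum_homogeneous[OF finite_hsupp])
  then show ?thesis by (auto simp: hsupp_def)
qed

lemma ad_locally_nilpotent_of_homogeneous:
  assumes "\<And>a l x. x \<in> G a l \<Longrightarrow> \<exists>N. (br t ^^ N) x = 0"
  shows "ad_locally_nilpotent t"
  unfolding ad_locally_nilpotent_def
proof
  fix x
  have "\<exists>N. (br t ^^ N) (\<Sum>i\<in>hsupp x. hcomp i x) = 0"
    by (rule ad_pow_vanish_sum[OF finite_hsupp]) (use assms hcomp_in_G in blast)
  then show "\<exists>N. (br t ^^ N) x = 0" by (subst sum_hcomp_hsupp)
qed

definition hbasis :: "'r \<times> (nat \<Rightarrow> int) \<Rightarrow> 'L set" where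
  "hbasis i = (SOME B. B \<subseteq> G (fst i) (snd i) \<and> V.independent B \<and> G (fst i) (snd i) \<subseteq> V.span B)"

lemma hbasis_is_basis: "hbasis i \<subseteq> G (fst i) (snd i) \<and> V.independent (hbasis i) \<and> G (fst i) (snd i) \<subseteq> V.span (hbasis i)"
  unfolding hbasis_def by (rule someI_ex) (metis V.basis_exists)

lemma hcomp_hbasis:
  assumes "v \<in> hbasis j"
  shows "hcomp i v = (if i = j then v else 0)"
proof -
  have "v \<in> G (fst j) (snd j)" using hbasis_is_basis assms by blast
  then show ?thesis using hcomp_homogeneous by auto
qed

lemma hbasis_nonzero: "v \<in> hbasis j \<Longrightarrow> v \<noteq> 0"
  using hbasis_is_basis V.dependent_zero by blast

lemma hbasis_disjoint:
  assumes "v \<in> hbasis j" "v \<in> hbasis i"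
  shows "i = j"
  using hcomp_hbasis[OF assms(1), of i] hcomp_hbasis[OF assms(2), of i] hbasis_nonzero[OF assms(1)]
  by (auto split: if_splits)

lemma independent_hbasis: "V.independent (\<Union>i. hbasis i)"
  unfolding V.dependent_explicit
proof clarify
  fix t u v0 assume t: "finite t" "t \<subseteq> (\<Union>i. hbasis i)" "(\<Sum>v\<in>t. smul (u v) v) = 0" "v0 \<in> t" "u v0 \<noteq> 0"
  obtain i0 where i0: "v0 \<in> hbasis i0" using t by blast
  have "0 = hcomp i0 (\<Sum>v\<in>t. smul (u v) v)" using t by simp
  also have "\<dots> = (\<Sum>v\<in>t. if v \<in> hbasis i0 then smul (u v) v else 0)"
    unfolding hcomp_sum hcomp_scale
  proof (rule sum.cong[OF refl])
    fix v assume "v \<in> t"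
    then obtain j where j: "v \<in> hbasis j" using t by blast
    show "smul (u v) (hcomp i0 v) = (if v \<in> hbasis i0 then smul (u v) v else 0)"
    proof (cases "v \<in> hbasis i0")
      case True
      then have "i0 = j" using hbasis_disjoint[OF j] by blast
      then show ?thesis using hcomp_hbasis[OF j, of i0] True by simp
    next
      case False
      then have "i0 \<noteq> j" using j by blast
      then show ?thesis using hcomp_hbasis[OF j, of i0] False by simp
    qed
  qed
  also have "\<dots> = (\<Sum>v\<in>t \<inter> hbasis i0. smul (u v) v)" by (rule sum.inter_restrict[OF t(1), symmetric])
  finally have "(\<Sum>v\<in>t \<inter> hbasis i0. smul (u v) v) = 0" by simp
  moreover have "V.independent (hbasis i0)" using hbasis_is_basis by blast
  ultimately have "u v0 = 0"
    using V.independentD[of "hbasis i0" "t \<inter> hbasis i0" u v0] t i0 by simp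
  then show False using t by simp
qed

lemma span_hbasis: "V.span (\<Union>i. hbasis i) = UNIV"
proof -
  have "(\<Union>a l. G a l) \<subseteq> V.span (\<Union>i. hbasis i)"
  proof clarify
    fix x a l assume x: "x \<in> G a l"
    have "G a l \<subseteq> V.span (hbasis (a, l))" using hbasis_is_basis[of "(a, l)"] by simp
    also have "\<dots> \<subseteq> V.span (\<Union>i. hbasis i)" by (rule V.span_mono) blast
    finally show "x \<in> V.span (\<Union>i. hbasis i)" using x by blast
  qed
  then have "V.span (\<Union>a l. G a l) \<subseteq> V.span (\<Union>i. hbasis i)"
    by (metis V.span_minimal V.subspace_span)
  then show ?thesis using G_spanning by blast
qed

lemma split_toral_if_homogeneous_eigenvectors:
  assumes "V.subspace T" "\<forall>a\<in>T. \<forall>b\<in>T. br a b = 0"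
    and eig: "\<And>t a l x. t \<in> T \<Longrightarrow> x \<in> G a l \<Longrightarrow> \<exists>c. br t x = smul c x"
  shows "split_toral smul br T"
  unfolding split_toral_def
proof (intro conjI exI)
  show "\<forall>b\<in>\<Union>i. hbasis i. \<forall>t\<in>T. \<exists>c. br t b = smul c b"
  proof clarify
    fix b i t assume "b \<in> hbasis i" "t \<in> T"
    then show "\<exists>c. br t b = smul c b" using hbasis_is_basis eig by blast
  qed
qed (use assms independent_hbasis span_hbasis in auto)

subsection \<open>Filtration by a degree functional on \<open>\<Lambda>\<close>\<close>

definition filt :: "((nat \<Rightarrow> int) \<Rightarrow> int) \<Rightarrow> int \<Rightarrow> 'L set" where
  "filt \<psi> d = {x. \<forall>i\<in>hsupp x. \<psi> (snd i) \<le> d}"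

definition homog :: "((nat \<Rightarrow> int) \<Rightarrow> int) \<Rightarrow> int \<Rightarrow> 'L set" where
  "homog \<psi> d = {x. \<forall>i\<in>hsupp x. \<psi> (snd i) = d}"

lemma filt_subspace: "V.subspace (filt \<psi> d)"
  unfolding filt_def hsupp_def
  by (rule V.subspaceI) (auto simp: hcomp_add hcomp_scale, metis add.right_neutral)

lemma homog_subspace: "V.subspace (homog \<psi> d)"
  unfolding homog_def hsupp_def
  by (rule V.subspaceI) (auto simp: hcomp_add hcomp_scale, metis add.right_neutral)

lemma filt_mono: "x \<in> filt \<psi> d \<Longrightarrow> d \<le> d' \<Longrightarrow> x \<in> filt \<psi> d'"
  unfolding filt_def by force

lemma homog_subset_filt: "x \<in> homog \<psi> d \<Longrightarrow> x \<in> filt \<psi> d"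
  unfolding filt_def homog_def by force

lemma G_in_filt: "x \<in> G a l \<Longrightarrow> \<psi> l \<le> d \<Longrightarrow> x \<in> filt \<psi> d"
  unfolding filt_def hsupp_def using hcomp_homogeneous by (auto split: if_splits)

lemma G_in_homog: "x \<in> G a l \<Longrightarrow> x \<in> homog \<psi> (\<psi> l)"
  unfolding homog_def hsupp_def using hcomp_homogeneous by (auto split: if_splits)

lemma filt_inter_homog: "x \<in> filt \<psi> (d - 1) \<Longrightarrow> x \<in> homog \<psi> d \<Longrightarrow> x = 0"
  unfolding filt_def homog_def hsupp_def by (rule hcomp_eq_0_imp_zero) force

lemma filt_bracket:
  assumes "Modules.additive \<psi>" "x \<in> filt \<psi> d1" "y \<in> filt \<psi> d2"
  shows "br x y \<in> filt \<psi> (d1 + d2)"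
  unfolding bracket_hcomp[of x y]
proof (intro V.subspace_sum[OF filt_subspace])
  fix i j assume "i \<in> hsupp x" "j \<in> hsupp y"
  then have "\<psi> (snd i + snd j) \<le> d1 + d2"
    using assms Modules.additive.add[OF assms(1)] unfolding filt_def by fastforce
  then show "br (hcomp i x) (hcomp j y) \<in> filt \<psi> (d1 + d2)"
    by (rule G_in_filt[OF G_bracket[OF hcomp_in_G hcomp_in_G]])
qed

lemma homog_bracket:
  assumes "Modules.additive \<psi>" "x \<in> homog \<psi> d1" "y \<in> homog \<psi> d2"
  shows "br x y \<in> homog \<psi> (d1 + d2)"
  unfolding bracket_hcomp[of x y]
proof (intro V.subspace_sum[OF homog_subspace])
  fix i j assume "i \<in> hsupp x" "j \<in> hsupp y"
  then have "\<psi> (snd i + snd j) = d1 + d2"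
    using assms Modules.additive.add[OF assms(1)] unfolding homog_def by fastforce
  then show "br (hcomp i x) (hcomp j y) \<in> homog \<psi> (d1 + d2)"
    using G_in_homog[OF G_bracket[OF hcomp_in_G hcomp_in_G]] by metis
qed

lemma ad_pow_in_filt:
  assumes "Modules.additive \<psi>" "t \<in> filt \<psi> p" "x \<in> G a l"
  shows "(br t ^^ j) x \<in> filt \<psi> (\<psi> l + int j * p)"
proof (induction j)
  case (Suc j)
  have "br t ((br t ^^ j) x) \<in> filt \<psi> (p + (\<psi> l + int j * p))"
    by (rule filt_bracket[OF assms(1,2) Suc])
  then show ?case by (simp add: algebra_simps)
qed (use G_in_filt[OF assms(3)] in simp)

definition leading :: "((nat \<Rightarrow> int) \<Rightarrow> int) \<Rightarrow> int \<Rightarrow> 'L \<Rightarrow> 'L" where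
  "leading \<psi> p t = (\<Sum>i\<in>{i\<in>hsupp t. \<psi> (snd i) = p}. hcomp i t)"

lemma hcomp_leading: "hcomp i (leading \<psi> p t) = (if \<psi> (snd i) = p then hcomp i t else 0)"
proof -
  have "hcomp i (leading \<psi> p t) = (if i \<in> {i\<in>hsupp t. \<psi> (snd i) = p} then hcomp i t else 0)"
    unfolding leading_def by (rule hcomp_sum_homogeneous) (use finite_hsupp hcomp_in_G in auto)
  then show ?thesis by (auto simp: hsupp_def)
qed

lemma hsupp_leading: "hsupp (leading \<psi> p t) = {i\<in>hsupp t. \<psi> (snd i) = p}"
  unfolding hsupp_def using hcomp_leading by auto

lemma leading_in_homog: "leading \<psi> p t \<in> homog \<psi> p"
  by (simp add: homog_def hsupp_leading)

lemma diff_leading_in_filt: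
  assumes "t \<in> filt \<psi> p"
  shows "t - leading \<psi> p t \<in> filt \<psi> (p - 1)"
proof -
  have "\<psi> (snd i) \<le> p - 1" if "hcomp i (t - leading \<psi> p t) \<noteq> 0" for i
  proof -
    from that have "\<psi> (snd i) \<noteq> p" "i \<in> hsupp t"
      by (auto simp: hcomp_diff hcomp_leading hsupp_def split: if_splits)
    then show ?thesis using assms unfolding filt_def by fastforce
  qed
  then show ?thesis unfolding filt_def hsupp_def by blast
qed

text \<open>The leading part \<open>t'\<close> of \<open>t\<close> shifts \<open>\<psi>\<close>-degrees by exactly \<open>p\<close>, while \<open>t - t'\<close>
  shifts them by less; so \<open>(ad t')\<^sup>J x\<close> is the top-degree part of \<open>(ad t)\<^sup>J x\<close>.\<close>
lemma leading_ad_pow_vanish: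
  assumes add: "Modules.additive \<psi>" and t: "t \<in> filt \<psi> p" and x: "x \<in> homog \<psi> d"
    and J: "(br t ^^ J) x \<in> filt \<psi> (d + int J * p - 1)"
  shows "(br (leading \<psi> p t) ^^ J) x = 0"
proof -
  let ?t' = "leading \<psi> p t"
  have top: "(br ?t' ^^ j) x \<in> homog \<psi> (d + int j * p)" for j
  proof (induction j)
    case (Suc j)
    have "br ?t' ((br ?t' ^^ j) x) \<in> homog \<psi> (p + (d + int j * p))"
      by (rule homog_bracket[OF add leading_in_homog Suc])
    then show ?case by (simp add: algebra_simps)
  qed (simp add: x)
  have rest: "(br t ^^ j) x - (br ?t' ^^ j) x \<in> filt \<psi> (d + int j * p - 1)" for j
  proof (induction j)
    case (Suc j)
    have "br t ((br t ^^ j) x - (br ?t' ^^ j) x) \<in> filt \<psi> (p + (d + int j * p - 1))"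
      by (rule filt_bracket[OF add t Suc])
    moreover have "br (t - ?t') ((br ?t' ^^ j) x) \<in> filt \<psi> ((p - 1) + (d + int j * p))"
      by (rule filt_bracket[OF add diff_leading_in_filt[OF t] homog_subset_filt[OF top]])
    ultimately have "br t ((br t ^^ j) x - (br ?t' ^^ j) x) + br (t - ?t') ((br ?t' ^^ j) x)
        \<in> filt \<psi> (d + int (Suc j) * p - 1)"
      by (intro V.subspace_add[OF filt_subspace]) (simp_all add: algebra_simps)
    then show ?case by (simp add: bracket_diff_right bracket_diff_left)
  qed (simp add: V.subspace_0[OF filt_subspace])
  have "(br ?t' ^^ J) x = (br t ^^ J) x - ((br t ^^ J) x - (br ?t' ^^ J) x)" by simp
  also have "\<dots> \<in> filt \<psi> (d + int J * p - 1)" using J rest V.subspace_diff[OF filt_subspace] by blast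
  finally show ?thesis using filt_inter_homog top by blast
qed

lemma leading_ad_locally_nilpotent:
  assumes add: "Modules.additive \<psi>" and t: "t \<in> filt \<psi> p"
    and drop: "\<And>a l x. x \<in> G a l \<Longrightarrow> \<exists>J. (br t ^^ J) x \<in> filt \<psi> (\<psi> l + int J * p - 1)"
  shows "ad_locally_nilpotent (leading \<psi> p t)"
proof (rule ad_locally_nilpotent_of_homogeneous)
  fix a l x assume x: "x \<in> G a l"
  obtain J where "(br t ^^ J) x \<in> filt \<psi> (\<psi> l + int J * p - 1)" using drop[OF x] by blast
  then have "(br (leading \<psi> p t) ^^ J) x = 0"
    by (rule leading_ad_pow_vanish[OF add t G_in_homog[OF x]])
  then show "\<exists>N. (br (leading \<psi> p t) ^^ N) x = 0" by blast
qed

definition max_degree :: "((nat \<Rightarrow> int) \<Rightarrow> int) \<Rightarrow> 'L \<Rightarrow> int" where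
  "max_degree \<psi> t = Max ((\<lambda>i. \<psi> (snd i)) ` hsupp t)"

lemma in_filt_max_degree: "t \<in> filt \<psi> (max_degree \<psi> t)"
  unfolding filt_def max_degree_def using finite_hsupp by simp

lemma max_degree_attained:
  assumes "t \<noteq> 0"
  shows "\<exists>i\<in>hsupp t. \<psi> (snd i) = max_degree \<psi> t"
proof -
  have "hsupp t \<noteq> {}" using assms hcomp_eq_0_imp_zero unfolding hsupp_def by blast
  then have "max_degree \<psi> t \<in> (\<lambda>i. \<psi> (snd i)) ` hsupp t"
    unfolding max_degree_def by (intro Max_in) (simp_all add: finite_hsupp)
  then show ?thesis by (force simp: image_iff)
qed

lemma max_degree_ge: "i \<in> hsupp t \<Longrightarrow> \<psi> (snd i) \<le> max_degree \<psi> t"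
  unfolding max_degree_def by (rule Max_ge) (use finite_hsupp in auto)

lemma leading_max_degree_nonzero:
  assumes "t \<noteq> 0"
  shows "leading \<psi> (max_degree \<psi> t) t \<noteq> 0"
proof -
  obtain i where "i \<in> hsupp t" "\<psi> (snd i) = max_degree \<psi> t"
    using max_degree_attained[OF assms] by blast
  then have "hcomp i (leading \<psi> (max_degree \<psi> t) t) \<noteq> 0" by (simp add: hcomp_leading hsupp_def)
  then show ?thesis by (metis hcomp_zero)
qed

lemma locally_finite_ad_pow_in_filt:
  assumes add: "Modules.additive \<psi>" and t: "t \<in> filt \<psi> p" and p: "1 \<le> p" and x: "x \<in> G a l"
    and J: "(br t ^^ J) x \<in> V.span {(br t ^^ j) x | j. j < J}"
  shows "(br t ^^ J) x \<in> filt \<psi> (\<psi> l + int J * p - 1)"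
proof -
  have "V.span {(br t ^^ j) x | j. j < J} \<subseteq> filt \<psi> (\<psi> l + int J * p - 1)"
  proof (rule V.span_minimal[OF _ filt_subspace], clarify)
    fix j assume "j < J"
    then have "(int j + 1) * p \<le> int J * p" using p by (intro mult_right_mono) auto
    then have "\<psi> l + int j * p \<le> \<psi> l + int J * p - 1" using p by (simp add: algebra_simps)
    then show "(br t ^^ j) x \<in> filt \<psi> (\<psi> l + int J * p - 1)"
      by (rule filt_mono[OF ad_pow_in_filt[OF add t x]])
  qed
  then show ?thesis using J by blast
qed

lemma leading_ad_locally_nilpotent_if_locally_finite:
  assumes "Modules.additive \<psi>" "t \<in> filt \<psi> p" "1 \<le> p"
    and "\<And>x. \<exists>J. (br t ^^ J) x \<in> V.span {(br t ^^ j) x | j. j < J}"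
  shows "ad_locally_nilpotent (leading \<psi> p t)"
  by (rule leading_ad_locally_nilpotent[OF assms(1,2)])
    (use locally_finite_ad_pow_in_filt[OF assms(1-3)] assms(4) in blast)

lemma leading_ad_locally_nilpotent_if_ad_locally_nilpotent:
  assumes "Modules.additive \<psi>" "t \<in> filt \<psi> p" "ad_locally_nilpotent t"
  shows "ad_locally_nilpotent (leading \<psi> p t)"
proof (rule leading_ad_locally_nilpotent[OF assms(1,2)])
  fix a l x
  obtain N where "(br t ^^ N) x = 0" using assms(3) unfolding ad_locally_nilpotent_def by blast
  then show "\<exists>J. (br t ^^ J) x \<in> filt \<psi> (\<psi> l + int J * p - 1)"
    using V.subspace_0[OF filt_subspace] by metis
qed

text \<open>Separating two degrees of the support by a coordinate of \<open>\<Lambda>\<close> and passing to the leading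
  part shrinks the support; by induction a single homogeneous component survives.\<close>
lemma exists_homogeneous_ad_locally_nilpotent:
  assumes "t \<noteq> 0" "\<forall>i\<in>hsupp t. fst i = 0 \<and> snd i \<noteq> 0" "ad_locally_nilpotent t"
  shows "\<exists>t0 \<mu>. t0 \<in> G 0 \<mu> \<and> \<mu> \<noteq> 0 \<and> t0 \<noteq> 0 \<and> ad_locally_nilpotent t0"
  using assms
proof (induction "card (hsupp t)" arbitrary: t rule: less_induct)
  case less
  show ?case
  proof (cases "\<exists>i1\<in>hsupp t. \<exists>i2\<in>hsupp t. i1 \<noteq> i2")
    case False
    have "hsupp t \<noteq> {}" using less.prems(1) by simp
    then obtain i where i: "i \<in> hsupp t" by blast
    then have "hsupp t \<subseteq> {i}" using False by blast
    then have "t \<in> G (fst i) (snd i)" by (rule hsupp_subset_singleton_imp_G)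
    then show ?thesis using less.prems i by fastforce
  next
    case True
    then obtain i1 i2 where ii: "i1 \<in> hsupp t" "i2 \<in> hsupp t" "i1 \<noteq> i2" by blast
    then have "snd i1 \<noteq> snd i2" using less.prems(2) by (metis prod.collapse)
    then obtain m where m: "snd i1 m \<noteq> snd i2 m" by (auto simp: fun_eq_iff)
    define \<psi> where "\<psi> l = l m" for l :: "nat \<Rightarrow> int"
    have add: "Modules.additive \<psi>" unfolding \<psi>_def by unfold_locales simp
    define p where "p = max_degree \<psi> t"
    define t' where "t' = leading \<psi> p t"
    have "\<not> (\<psi> (snd i1) = p \<and> \<psi> (snd i2) = p)" using m unfolding \<psi>_def by auto
    then have "hsupp t' \<subset> hsupp t" using ii unfolding t'_def hsupp_leading by auto
    then have "card (hsupp t') < card (hsupp t)" by (rule psubset_card_mono[OF finite_hsupp])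
    moreover have "t' \<noteq> 0" unfolding t'_def p_def by (rule leading_max_degree_nonzero[OF less.prems(1)])
    moreover have "\<forall>i\<in>hsupp t'. fst i = 0 \<and> snd i \<noteq> 0"
      using less.prems(2) unfolding t'_def hsupp_leading by auto
    moreover have "ad_locally_nilpotent t'"
      unfolding t'_def p_def
      by (rule leading_ad_locally_nilpotent_if_ad_locally_nilpotent[OF add in_filt_max_degree less.prems(3)])
    ultimately show ?thesis using less.hyps by blast
  qed
qed

end

section \<open>Lie tori\<close>

locale lie_torus_struct =
  fixes smul :: "'k::field_char_0 \<Rightarrow> 'L::ab_group_add \<Rightarrow> 'L" and br :: "'L \<Rightarrow> 'L \<Rightarrow> 'L"
    and \<Delta> :: "'r::euclidean_space set" and n :: nat and G :: "'r \<Rightarrow> (nat \<Rightarrow> int) \<Rightarrow> 'L set"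
  assumes torus: "lie_torus smul br \<Delta> n G"
begin

lemmas torus_unfolded = torus[unfolded lie_torus_def]

sublocale graded_lie smul br \<Delta> n G
proof unfold_locales
  show "lie_algebra smul br" using torus_unfolded by (elim conjE)
  show "QL_graded smul br \<Delta> n G" using torus_unfolded by (elim conjE)
qed

sublocale lie_alg_char_0 smul br ..

lemma root_system_nonzero_roots: "root_system (\<Delta> - {0})"
  using torus_unfolded unfolding irreducible_finite_root_system_def irreducible_root_system_def
  by (elim conjE)

lemma finite_roots: "finite \<Delta>"
proof -
  have "finite (\<Delta> - {0})" using root_system_nonzero_roots unfolding root_system_def by blast
  then show ?thesis by (metis finite_Diff2 finite.emptyI finite_insert)
qed

lemma roots_eq: "{a. root_space smul G a \<noteq> {0}} = \<Delta>"
  using torus_unfolded by (elim conjE)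

lemma lie_generated_root_spaces: "lie_generated smul br (\<Union>a\<in>\<Delta> - {0}. root_space smul G a) = UNIV"
  using torus_unfolded by (elim conjE)

definition acts_as_coroot :: "'L \<Rightarrow> 'r \<Rightarrow> bool" where
  "acts_as_coroot h a \<longleftrightarrow>
     (\<forall>b\<in>int_span \<Delta>. \<forall>x\<in>root_space smul G b. br h x = smul (of_int (coroot_pair b a)) x)"

lemma exists_sl2_pair:
  assumes "a \<in> \<Delta> - {0}" "G a l \<noteq> {0}"
  obtains e f where "e \<in> G a l" "f \<in> G (- a) (- l)" "G a l = range (\<lambda>c. smul c e)"
    "G (- a) (- l) = range (\<lambda>c. smul c f)" "acts_as_coroot (br e f) a"
proof -
  have "\<forall>a\<in>\<Delta> - {0}. \<forall>l. G a l \<noteq> {0} \<longrightarrow>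
        (\<exists>e\<in>G a l. \<exists>f\<in>G (- a) (- l).
            G a l = range (\<lambda>c. smul c e) \<and> G (- a) (- l) = range (\<lambda>c. smul c f) \<and>
            (\<forall>b\<in>int_span \<Delta>. \<forall>x\<in>root_space smul G b.
                br (br e f) x = smul (of_int (coroot_pair b a)) x))"
    using torus_unfolded by (elim conjE)
  then show ?thesis using assms that unfolding acts_as_coroot_def by blast
qed

lemma root_space_trivial: "b \<notin> int_span \<Delta> \<Longrightarrow> root_space smul G b = {0}"
  unfolding root_space_def using G_trivial by auto

lemma G_nonzero_imp_root:
  assumes "G a l \<noteq> {0}"
  shows "a \<in> \<Delta>"
proof (rule ccontr)
  assume "a \<notin> \<Delta>"
  then have "root_space smul G a = {0}" using roots_eq by blast
  then show False using assms G_subset_root_space[of _ a l] by auto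
qed

lemma root_has_nonzero_component:
  assumes "\<alpha> \<in> \<Delta>"
  shows "\<exists>\<mu>. G \<alpha> \<mu> \<noteq> {0}"
proof (rule ccontr)
  assume "\<not> ?thesis"
  then have "root_space smul G \<alpha> = {0}" unfolding root_space_def by simp
  then show False using roots_eq assms by blast
qed

lemma acts_as_coroot_homogeneous:
  assumes "acts_as_coroot h a" "v \<in> G b l"
  shows "br h v = smul (of_int (coroot_pair b a)) v"
proof (cases "b \<in> int_span \<Delta>")
  case True
  then show ?thesis using assms G_subset_root_space unfolding acts_as_coroot_def by blast
next
  case False
  then show ?thesis using assms(2) G_trivial by auto
qed

definition scalar_on_root_spaces :: "'L set" where
  "scalar_on_root_spaces =
     {s. \<forall>b. \<exists>c. (b = 0 \<longrightarrow> c = 0) \<and> (\<forall>x\<in>root_space smul G b. br s x = smul c x)}"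

lemma scalar_on_root_spacesD:
  "s \<in> scalar_on_root_spaces \<Longrightarrow> \<exists>c. (b = 0 \<longrightarrow> c = 0) \<and> (\<forall>x\<in>root_space smul G b. br s x = smul c x)"
  unfolding scalar_on_root_spaces_def by blast

lemma subspace_scalar_on_root_spaces: "V.subspace scalar_on_root_spaces"
proof (rule V.subspaceI)
  show "0 \<in> scalar_on_root_spaces" unfolding scalar_on_root_spaces_def by (auto intro!: exI[of _ 0])
next
  fix x y assume xy: "x \<in> scalar_on_root_spaces" "y \<in> scalar_on_root_spaces"
  show "x + y \<in> scalar_on_root_spaces" unfolding scalar_on_root_spaces_def
  proof (intro CollectI allI)
    fix b
    obtain c1 where "b = 0 \<longrightarrow> c1 = 0" "\<forall>z\<in>root_space smul G b. br x z = smul c1 z"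
      using scalar_on_root_spacesD[OF xy(1)] by blast
    moreover obtain c2 where "b = 0 \<longrightarrow> c2 = 0" "\<forall>z\<in>root_space smul G b. br y z = smul c2 z"
      using scalar_on_root_spacesD[OF xy(2)] by blast
    ultimately show "\<exists>c. (b = 0 \<longrightarrow> c = 0) \<and> (\<forall>z\<in>root_space smul G b. br (x + y) z = smul c z)"
      by (intro exI[of _ "c1 + c2"]) (auto simp: bracket_add_left V.scale_left_distrib)
  qed
next
  fix k x assume x: "x \<in> scalar_on_root_spaces"
  show "smul k x \<in> scalar_on_root_spaces" unfolding scalar_on_root_spaces_def
  proof (intro CollectI allI)
    fix b
    obtain c where "b = 0 \<longrightarrow> c = 0" "\<forall>z\<in>root_space smul G b. br x z = smul c z"
      using scalar_on_root_spacesD[OF x] by blast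
    then show "\<exists>c. (b = 0 \<longrightarrow> c = 0) \<and> (\<forall>z\<in>root_space smul G b. br (smul k x) z = smul c z)"
      by (intro exI[of _ "k * c"]) (auto simp: bracket_scale_left)
  qed
qed

lemma acts_as_coroot_scalar_on_root_spaces:
  assumes "acts_as_coroot h a"
  shows "h \<in> scalar_on_root_spaces"
  unfolding scalar_on_root_spaces_def
proof (intro CollectI allI)
  fix b
  show "\<exists>c. (b = 0 \<longrightarrow> c = 0) \<and> (\<forall>x\<in>root_space smul G b. br h x = smul c x)"
  proof (cases "b \<in> int_span \<Delta>")
    case True
    then show ?thesis
      using assms unfolding acts_as_coroot_def by (intro exI[of _ "of_int (coroot_pair b a)"]) auto
  next
    case False
    then show ?thesis using root_space_trivial by (intro exI[of _ 0]) auto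
  qed
qed

lemma bracket_opposite_scalar_on_root_spaces:
  assumes "\<alpha> \<noteq> 0" "e \<in> G \<alpha> \<mu>" "f \<in> G (- \<alpha>) (- \<mu>)"
  shows "br e f \<in> scalar_on_root_spaces"
proof (cases "G \<alpha> \<mu> = {0}")
  case True
  then show ?thesis using assms V.subspace_0[OF subspace_scalar_on_root_spaces] by auto
next
  case False
  then have "\<alpha> \<in> \<Delta> - {0}" using G_nonzero_imp_root assms by blast
  then obtain e0 f0 where ef: "e0 \<in> G \<alpha> \<mu>" "f0 \<in> G (- \<alpha>) (- \<mu>)" "G \<alpha> \<mu> = range (\<lambda>c. smul c e0)"
    "G (- \<alpha>) (- \<mu>) = range (\<lambda>c. smul c f0)" "acts_as_coroot (br e0 f0) \<alpha>"
    using False by (rule exists_sl2_pair)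
  obtain c1 c2 where "e = smul c1 e0" "f = smul c2 f0" using ef assms by blast
  then have "br e f = smul (c1 * c2) (br e0 f0)" by (simp add: bracket_scale_left bracket_scale_right)
  then show ?thesis
    using V.subspace_scale[OF subspace_scalar_on_root_spaces acts_as_coroot_scalar_on_root_spaces[OF ef(5)]]
    by simp
qed

definition root_vectors :: "'L set" where
  "root_vectors = {x. \<exists>\<alpha> \<mu>. \<alpha> \<noteq> 0 \<and> x \<in> G \<alpha> \<mu>}"

definition opposite_brackets :: "'L set" where
  "opposite_brackets = {y. \<exists>\<alpha> \<mu> \<nu> e f. \<alpha> \<noteq> 0 \<and> e \<in> G \<alpha> \<mu> \<and> f \<in> G (- \<alpha>) \<nu> \<and> y = br e f}"

lemma opposite_bracket_in_G0:
  "y \<in> opposite_brackets \<Longrightarrow> \<exists>\<alpha> \<mu> \<nu> e f. \<alpha> \<noteq> 0 \<and> e \<in> G \<alpha> \<mu> \<and> f \<in> G (- \<alpha>) \<nu> \<and> y = br e f \<and> y \<in> G 0 (\<mu> + \<nu>)"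
  unfolding opposite_brackets_def using G_bracket by fastforce

lemma root_vector_in_span: "x \<in> G \<alpha> \<mu> \<Longrightarrow> \<alpha> \<noteq> 0 \<Longrightarrow> x \<in> V.span (root_vectors \<union> opposite_brackets)"
  by (rule V.span_base) (auto simp: root_vectors_def)

lemma opposite_bracket_in_span:
  "e \<in> G \<alpha> \<mu> \<Longrightarrow> f \<in> G (- \<alpha>) \<nu> \<Longrightarrow> \<alpha> \<noteq> 0 \<Longrightarrow> br e f \<in> V.span (root_vectors \<union> opposite_brackets)"
  by (rule V.span_base, rule UnI2) (unfold opposite_brackets_def, blast)

lemma bracket_root_vector_in_span:
  assumes "x \<in> root_vectors" "y \<in> root_vectors \<union> opposite_brackets"
  shows "br x y \<in> V.span (root_vectors \<union> opposite_brackets)"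
proof -
  obtain \<alpha> \<mu> where x: "\<alpha> \<noteq> 0" "x \<in> G \<alpha> \<mu>" using assms(1) unfolding root_vectors_def by blast
  show ?thesis using assms(2) unfolding Un_iff
  proof
    assume "y \<in> root_vectors"
    then obtain \<beta> \<nu> where y: "y \<in> G \<beta> \<nu>" unfolding root_vectors_def by blast
    show ?thesis
    proof (cases "\<alpha> + \<beta> = 0")
      case True
      then have "\<beta> = - \<alpha>" by (simp add: eq_neg_iff_add_eq_0 add.commute)
      then show ?thesis using opposite_bracket_in_span x y by blast
    next
      case False
      then show ?thesis using root_vector_in_span G_bracket[OF x(2) y] by blast
    qed
  next
    assume "y \<in> opposite_brackets"
    then obtain \<rho> \<sigma> where "y \<in> G 0 (\<rho> + \<sigma>)" using opposite_bracket_in_G0 by blast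
    then show ?thesis using root_vector_in_span G_bracket[OF x(2)] x(1) by fastforce
  qed
qed

lemma bracket_opposite_brackets_in_span:
  assumes "x \<in> opposite_brackets" "y \<in> opposite_brackets"
  shows "br x y \<in> V.span (root_vectors \<union> opposite_brackets)"
proof -
  obtain \<rho> \<sigma> where x: "x \<in> G 0 (\<rho> + \<sigma>)" using assms(1) opposite_bracket_in_G0 by blast
  obtain \<delta> \<tau> \<upsilon> e f where y: "\<delta> \<noteq> 0" "e \<in> G \<delta> \<tau>" "f \<in> G (- \<delta>) \<upsilon>" "y = br e f"
    using assms(2) opposite_bracket_in_G0 by blast
  have "br x y = br (br x e) f + br e (br x f)" unfolding y(4) by (rule jacobi)
  moreover have "br (br x e) f \<in> V.span (root_vectors \<union> opposite_brackets)"
    using opposite_bracket_in_span G_bracket[OF x y(2)] y(3,1) by fastforce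
  moreover have "br e (br x f) \<in> V.span (root_vectors \<union> opposite_brackets)"
    using opposite_bracket_in_span y(2) G_bracket[OF x y(3)] y(1) by fastforce
  ultimately show ?thesis using V.span_add by simp
qed

lemma bracket_generators_in_span:
  assumes "x \<in> root_vectors \<union> opposite_brackets" "y \<in> root_vectors \<union> opposite_brackets"
  shows "br x y \<in> V.span (root_vectors \<union> opposite_brackets)"
proof (cases "x \<in> root_vectors")
  case True
  then show ?thesis using bracket_root_vector_in_span assms(2) by blast
next
  case False
  show ?thesis
  proof (cases "y \<in> root_vectors")
    case True
    then have "br y x \<in> V.span (root_vectors \<union> opposite_brackets)"
      using bracket_root_vector_in_span assms(1) by blast
    then show ?thesis using bracket_antisym[of x y] V.span_neg by simp
  next
    case False
    then show ?thesis using bracket_opposite_brackets_in_span assms \<open>x \<notin> root_vectors\<close> by blast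
  qed
qed

lemma span_root_vectors_opposite_brackets: "V.span (root_vectors \<union> opposite_brackets) = UNIV"
proof -
  let ?M = "V.span (root_vectors \<union> opposite_brackets)"
  have closed_left: "br x y \<in> ?M" if "x \<in> root_vectors \<union> opposite_brackets" "y \<in> ?M" for x y
  proof -
    have "V.subspace {y. br x y \<in> ?M}"
      by (rule V.subspaceI) (auto simp: bracket_add_right bracket_scale_right V.span_zero V.span_add V.span_scale)
    moreover have "root_vectors \<union> opposite_brackets \<subseteq> {y. br x y \<in> ?M}"
      using bracket_generators_in_span that(1) by blast
    ultimately show ?thesis using V.span_minimal that(2) by blast
  qed
  have closed: "br x y \<in> ?M" if "x \<in> ?M" "y \<in> ?M" for x y
  proof -
    have "V.subspace {x. br x y \<in> ?M}"
      by (rule V.subspaceI) (auto simp: bracket_add_left bracket_scale_left V.span_zero V.span_add V.span_scale)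
    moreover have "root_vectors \<union> opposite_brackets \<subseteq> {x. br x y \<in> ?M}"
      using closed_left that(2) by blast
    ultimately show ?thesis using V.span_minimal that(1) by blast
  qed
  have "root_space smul G a \<subseteq> ?M" if "a \<noteq> 0" for a
  proof -
    have "(\<Union>l. G a l) \<subseteq> ?M" using root_vector_in_span that by blast
    then show ?thesis unfolding root_space_def by (metis V.span_minimal V.subspace_span)
  qed
  then have "lie_generated smul br (\<Union>a\<in>\<Delta> - {0}. root_space smul G a) \<subseteq> ?M"
    by (intro lie_generated_minimal) (auto simp: closed)
  then show ?thesis using lie_generated_root_spaces by blast
qed

lemma hcomp_00_generator_scalar_on_root_spaces:
  assumes z: "z \<in> root_vectors \<union> opposite_brackets"
  shows "hcomp (0, 0) z \<in> scalar_on_root_spaces"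
proof (cases "z \<in> root_vectors")
  case True
  then obtain \<alpha> \<mu> where "\<alpha> \<noteq> 0" "z \<in> G \<alpha> \<mu>" unfolding root_vectors_def by blast
  then show ?thesis using hcomp_homogeneous V.subspace_0[OF subspace_scalar_on_root_spaces] by simp
next
  case False
  then obtain \<alpha> \<mu> \<nu> e f where g: "\<alpha> \<noteq> 0" "e \<in> G \<alpha> \<mu>" "f \<in> G (- \<alpha>) \<nu>" "z = br e f"
      "z \<in> G 0 (\<mu> + \<nu>)"
    using z opposite_bracket_in_G0 by blast
  show ?thesis
  proof (cases "\<mu> + \<nu> = 0")
    case True
    then have "\<nu> = - \<mu>" by (simp add: eq_neg_iff_add_eq_0 add.commute)
    then show ?thesis using bracket_opposite_scalar_on_root_spaces g hcomp_homogeneous[OF g(5)] True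
      by simp
  next
    case False
    then show ?thesis
      using hcomp_homogeneous[OF g(5)] V.subspace_0[OF subspace_scalar_on_root_spaces] by simp
  qed
qed

lemma G00_subset_scalar_on_root_spaces: "G 0 0 \<subseteq> scalar_on_root_spaces"
proof
  fix s assume s: "s \<in> G 0 0"
  let ?S = "scalar_on_root_spaces"
  have "V.subspace {z. hcomp (0, 0) z \<in> ?S}"
    by (rule V.subspaceI) (auto simp: hcomp_add hcomp_scale V.subspace_0[OF subspace_scalar_on_root_spaces]
        V.subspace_add[OF subspace_scalar_on_root_spaces] V.subspace_scale[OF subspace_scalar_on_root_spaces])
  moreover have "root_vectors \<union> opposite_brackets \<subseteq> {z. hcomp (0, 0) z \<in> ?S}"
    using hcomp_00_generator_scalar_on_root_spaces by blast
  ultimately have "hcomp (0, 0) s \<in> ?S"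
    using V.span_minimal span_root_vectors_opposite_brackets by blast
  then show "s \<in> ?S" using hcomp_homogeneous[OF s] by simp
qed

lemma split_toral_G00: "split_toral smul br (G 0 0)"
proof (rule split_toral_if_homogeneous_eigenvectors[OF G_subspace])
  have scalar: "\<exists>c. (b = 0 \<longrightarrow> c = 0) \<and> (\<forall>x\<in>root_space smul G b. br t x = smul c x)"
    if "t \<in> G 0 0" for t b
    using scalar_on_root_spacesD G00_subset_scalar_on_root_spaces that by blast
  show "\<forall>s\<in>G 0 0. \<forall>t\<in>G 0 0. br s t = 0"
  proof (intro ballI)
    fix s t assume "s \<in> G 0 0" "t \<in> G 0 0"
    then show "br s t = 0" using scalar[of s 0] G_subset_root_space by fastforce
  qed
  show "\<exists>c. br t x = smul c x" if "t \<in> G 0 0" "x \<in> G a l" for t a l x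
    using scalar[OF that(1), of a] G_subset_root_space[OF that(2)] by blast
qed

subsection \<open>Maximality of \<open>G 0 0\<close>\<close>

lemma centralizer_G00_root_zero:
  assumes comm: "\<forall>s\<in>G 0 0. br s t = 0" and i: "i \<in> hsupp t"
  shows "fst i = 0"
proof -
  have nz: "hcomp i t \<noteq> 0" using i unfolding hsupp_def by simp
  have "fst i \<in> int_span \<Delta>"
  proof (rule ccontr)
    assume "fst i \<notin> int_span \<Delta>"
    then have "G (fst i) (snd i) = {0}" by (intro G_trivial) simp
    then show False using hcomp_in_G[of i t] nz by simp
  qed
  moreover have "coroot_pair (fst i) \<alpha> = 0" if \<alpha>: "\<alpha> \<in> \<Delta> - {0}" for \<alpha>
  proof -
    from \<alpha> have "\<alpha> \<in> \<Delta>" by simp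
    then obtain \<mu> where "G \<alpha> \<mu> \<noteq> {0}" by (rule exE[OF root_has_nonzero_component])
    then obtain e f where ef: "e \<in> G \<alpha> \<mu>" "f \<in> G (- \<alpha>) (- \<mu>)" "G \<alpha> \<mu> = range (\<lambda>c. smul c e)"
      "G (- \<alpha>) (- \<mu>) = range (\<lambda>c. smul c f)" "acts_as_coroot (br e f) \<alpha>"
      by (rule exists_sl2_pair[OF \<alpha>])
    have "br e f \<in> G 0 0" using G_bracket[OF ef(1,2)] by simp
    then have "br (br e f) t = 0" using comm by blast
    moreover have "hcomp i (br (br e f) t) = smul (of_int (coroot_pair (fst i) \<alpha>)) (hcomp i t)"
      by (rule hcomp_bracket_diagonal[where \<phi> = "\<lambda>b. of_int (coroot_pair b \<alpha>)"])
        (rule acts_as_coroot_homogeneous[OF ef(5) hcomp_in_G])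
    ultimately have "smul (of_int (coroot_pair (fst i) \<alpha>)) (hcomp i t) = 0" by simp
    then show ?thesis using nz by simp
  qed
  ultimately show ?thesis using coroot_pairs_zero_imp_zero[OF root_system_nonzero_roots] by blast
qed

text \<open>The sign of \<open>\<psi>\<close> makes the top \<open>\<psi>\<close>-degree of \<open>t\<close> positive; the leading part is then
  locally ad-nilpotent because \<open>ad t\<close> is locally finite.\<close>
lemma exists_zero_root_ad_locally_nilpotent:
  assumes T: "split_toral smul br T" "G 0 0 \<subseteq> T" and t: "t \<in> T" "t \<notin> G 0 0"
  shows "\<exists>t1. t1 \<noteq> 0 \<and> (\<forall>i\<in>hsupp t1. fst i = 0 \<and> snd i \<noteq> 0) \<and> ad_locally_nilpotent t1"
proof -
  have "\<forall>s\<in>G 0 0. br s t = 0" using T t(1) unfolding split_toral_def by blast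
  then have root0: "fst i = 0" if "i \<in> hsupp t" for i using centralizer_G00_root_zero that by blast
  have "\<exists>i0\<in>hsupp t. snd i0 \<noteq> 0"
  proof (rule ccontr)
    assume none: "\<not> ?thesis"
    have "hsupp t \<subseteq> {(0, 0)}"
    proof
      fix i assume "i \<in> hsupp t"
      then have "fst i = 0" "snd i = 0" using root0 none by blast+
      then show "i \<in> {(0, 0)}" by (simp add: prod_eq_iff)
    qed
    then show False using hsupp_subset_singleton_imp_G t(2) by fastforce
  qed
  then obtain i0 where i0: "i0 \<in> hsupp t" "snd i0 \<noteq> 0" by blast
  then obtain m where m: "snd i0 m \<noteq> 0" by (auto simp: fun_eq_iff)
  define \<psi> where "\<psi> l = sgn (snd i0 m) * l m" for l :: "nat \<Rightarrow> int"
  have add: "Modules.additive \<psi>" unfolding \<psi>_def by unfold_locales (simp add: algebra_simps)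
  define p where "p = max_degree \<psi> t"
  have "0 < \<psi> (snd i0)" using m unfolding \<psi>_def by (auto simp: sgn_if)
  then have p: "1 \<le> p" using max_degree_ge[OF i0(1), of \<psi>] unfolding p_def by linarith
  define t1 where "t1 = leading \<psi> p t"
  have "t1 \<noteq> 0" unfolding t1_def p_def by (rule leading_max_degree_nonzero) (use t(2) in auto)
  moreover have "\<forall>i\<in>hsupp t1. fst i = 0 \<and> snd i \<noteq> 0"
    using root0 p Modules.additive.zero[OF add] unfolding t1_def hsupp_leading by auto
  moreover have "ad_locally_nilpotent t1"
    unfolding t1_def p_def
    by (rule leading_ad_locally_nilpotent_if_locally_finite[OF add in_filt_max_degree])
      (use p split_toral_ad_locally_finite[OF T(1) t(1)] in \<open>simp_all add: p_def\<close>)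
  ultimately show ?thesis by blast
qed

text \<open>With \<open>h = [e, f]\<close>, the vector \<open>[t0, f]\<close> is killed by \<open>e\<close> and has \<open>h\<close>-weight \<open>-2\<close>;
  since the root string \<open>-a, -2a, \<dots>\<close> leaves \<open>\<Delta>\<close>, the sl2 computation forces it to vanish.\<close>
lemma ad_kills_opposite_root_vector:
  assumes t0: "t0 \<in> G 0 \<mu>" and a: "a \<noteq> 0" and e: "e \<in> G a \<nu>" and f: "f \<in> G (- a) \<rho>"
    and h: "acts_as_coroot (br e f) a" and te: "br t0 e = 0"
  shows "br t0 f = 0"
proof -
  define g where "g = br t0 f"
  have gG: "g \<in> G (- a) (\<mu> + \<rho>)" unfolding g_def using G_bracket[OF t0 f] by simp
  have hf: "br (br e f) f = smul (- 2) f" and hg: "br (br e f) g = smul (- 2) g"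
    using acts_as_coroot_homogeneous[OF h] f gG coroot_pair_minus_self[OF a] by simp_all
  have "br (br e f) t0 = 0" using acts_as_coroot_homogeneous[OF h t0] by simp
  then have "br e g = 0"
    using jacobi[of e t0 f] te bracket_antisym[of e t0] bracket_antisym[of t0 "br e f"]
    unfolding g_def by simp
  have string: "\<exists>l. (br f ^^ j) g \<in> G (- real (Suc j) *\<^sub>R a) l" for j
  proof (induction j)
    case (Suc j)
    then obtain l where "(br f ^^ j) g \<in> G (- real (Suc j) *\<^sub>R a) l" by blast
    then have "br f ((br f ^^ j) g) \<in> G (- a + - real (Suc j) *\<^sub>R a) (\<rho> + l)"
      by (rule G_bracket[OF f])
    moreover have "- a + - real (Suc j) *\<^sub>R a = - real (Suc (Suc j)) *\<^sub>R a"
      by (simp add: algebra_simps scaleR_add_left scaleR_2)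
    ultimately show ?case by auto
  qed (use gG in auto)
  obtain K where "- real (Suc K) *\<^sub>R a \<notin> \<Delta>" using finite_omits_negative_multiple[OF finite_roots a] by blast
  then have "(br f ^^ K) g = 0" using string[of K] G_nonzero_imp_root by blast
  then have "g = 0"
    using sl2_highest_weight_vector_eq_0[OF refl hf hg \<open>br e g = 0\<close>] minus_two_neq_of_nat by blast
  then show ?thesis unfolding g_def .
qed

text \<open>On the \<open>2\<close>-eigenspace of \<open>h = [t0, u]\<close>, which \<open>ad t0\<close> and \<open>ad u\<close> preserve,
  \<open>[ad t0, ad u] = 2\<close> with \<open>ad t0\<close> nilpotent, so this eigenspace is zero.\<close>
lemma coroot_not_bracket_with_ad_nilpotent:
  assumes t0: "t0 \<in> G 0 \<mu>" and nil: "\<forall>x. (br t0 ^^ N) x = 0" and u: "u \<in> G 0 \<nu>"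
    and h: "acts_as_coroot (br t0 u) a" and a: "a \<noteq> 0" and y: "y \<in> G a \<rho>"
  shows "y = 0"
proof (rule commutator_scalar_ad_nilpotent_eq_0)
  let ?h = "br t0 u"
  define W where "W = {v. br ?h v = smul 2 v}"
  have ht0: "br ?h t0 = 0" and hu: "br ?h u = 0"
    using acts_as_coroot_homogeneous[OF h] t0 u by simp_all
  show "br t0 (br u v) = br u (br t0 v) + smul 2 v" if "v \<in> W" for v
    using jacobi[of t0 u v] that unfolding W_def by (simp add: add.commute)
  show "br t0 v \<in> W" if "v \<in> W" for v
    using jacobi[of ?h t0 v] that ht0 unfolding W_def by (simp add: bracket_scale_right)
  show "br u v \<in> W" if "v \<in> W" for v
    using jacobi[of ?h u v] that hu unfolding W_def by (simp add: bracket_scale_right)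
  show "(br t0 ^^ N) v = 0" for v using nil by blast
  show "y \<in> W" using acts_as_coroot_homogeneous[OF h y] coroot_pair_self[OF a] unfolding W_def by simp
qed simp

lemma ad_nilpotent_homogeneous_kills_root_vectors:
  assumes t0: "t0 \<in> G 0 \<mu>" and nil: "\<forall>x. (br t0 ^^ N) x = 0" and a: "a \<noteq> 0" and x: "x \<in> G a \<nu>"
  shows "br t0 x = 0"
proof (rule ccontr)
  assume "br t0 x \<noteq> 0"
  then obtain k where k: "br t0 ((br t0 ^^ k) x) \<noteq> 0" "br t0 (br t0 ((br t0 ^^ k) x)) = 0"
    using last_nonzero_ad_iterate nil by blast
  define x' where "x' = (br t0 ^^ k) x"
  define y where "y = br t0 x'"
  obtain l where x': "x' \<in> G a l" using ad_pow_zero_root_homogeneous[OF t0 x] unfolding x'_def by blast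
  have yG: "y \<in> G a (\<mu> + l)" unfolding y_def using G_bracket[OF t0 x'] by simp
  have "y \<noteq> 0" "br t0 y = 0" using k unfolding y_def x'_def by auto
  then have Gnz: "G a (\<mu> + l) \<noteq> {0}" using yG by blast
  then have "a \<in> \<Delta> - {0}" using G_nonzero_imp_root a by blast
  then obtain e f where ef: "e \<in> G a (\<mu> + l)" "f \<in> G (- a) (- (\<mu> + l))"
    "G a (\<mu> + l) = range (\<lambda>c. smul c e)" "G (- a) (- (\<mu> + l)) = range (\<lambda>c. smul c f)"
    "acts_as_coroot (br e f) a"
    using Gnz by (rule exists_sl2_pair)
  obtain c where c: "y = smul c e" using ef(3) yG by blast
  with \<open>y \<noteq> 0\<close> have "c \<noteq> 0" by auto
  with \<open>br t0 y = 0\<close> have "br t0 e = 0" unfolding c by (simp add: bracket_scale_right)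
  then have tf: "br t0 f = 0" by (rule ad_kills_opposite_root_vector[OF t0 a ef(1,2,5)])
  define u where "u = smul (inverse c) (br x' f)"
  have u: "u \<in> G 0 (l + - (\<mu> + l))" unfolding u_def using G_bracket[OF x' ef(2)] by (simp add: G_scale)
  have "br t0 u = br e f"
    using jacobi[of t0 x' f] tf \<open>c \<noteq> 0\<close> unfolding u_def y_def[symmetric] c
    by (simp add: bracket_scale_left bracket_scale_right)
  then have "acts_as_coroot (br t0 u) a" using ef(5) by simp
  then have "y = 0" by (rule coroot_not_bracket_with_ad_nilpotent[OF t0 nil u _ a yG])
  with \<open>y \<noteq> 0\<close> show False ..
qed

lemma ad_nilpotent_homogeneous_central:
  assumes "t0 \<in> G 0 \<mu>" "\<forall>x. (br t0 ^^ N) x = 0"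
  shows "br t0 z = 0"
proof (rule ad_vanishes_on_lie_generated)
  show "\<forall>x\<in>\<Union>a\<in>\<Delta> - {0}. root_space smul G a. br t0 x = 0"
  proof
    fix x assume "x \<in> (\<Union>a\<in>\<Delta> - {0}. root_space smul G a)"
    then obtain a where "a \<noteq> 0" "x \<in> root_space smul G a" by blast
    moreover have "(\<Union>l. G a l) \<subseteq> {z. br t0 z = 0}"
      using ad_nilpotent_homogeneous_kills_root_vectors[OF assms] \<open>a \<noteq> 0\<close> by blast
    ultimately show "br t0 x = 0"
      unfolding root_space_def using V.span_minimal[OF _ subspace_kernel_ad] by blast
  qed
qed (simp add: lie_generated_root_spaces)

lemma split_toral_containing_G00_subset:
  assumes "fgc smul br" "centreless br" "split_toral smul br T" "G 0 0 \<subseteq> T"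
  shows "T \<subseteq> G 0 0"
proof (rule ccontr)
  assume "\<not> T \<subseteq> G 0 0"
  then obtain t where "t \<in> T" "t \<notin> G 0 0" by blast
  then obtain t1 where "t1 \<noteq> 0" "\<forall>i\<in>hsupp t1. fst i = 0 \<and> snd i \<noteq> 0" "ad_locally_nilpotent t1"
    using exists_zero_root_ad_locally_nilpotent assms(3,4) by blast
  then obtain t0 \<mu> where t0: "t0 \<in> G 0 \<mu>" "t0 \<noteq> 0" "ad_locally_nilpotent t0"
    using exists_homogeneous_ad_locally_nilpotent by blast
  obtain N where "\<forall>x. (br t0 ^^ N) x = 0"
    using fgc_ad_locally_nilpotent_imp_nilpotent[OF assms(1) t0(3)] by blast
  then have "\<forall>z. br t0 z = 0" using ad_nilpotent_homogeneous_central[OF t0(1)] by blast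
  then show False using t0(2) assms(2) unfolding centreless_def by blast
qed

end

theorem corollary5p5:
  fixes smul :: "'k::field_char_0 \<Rightarrow> 'L::ab_group_add \<Rightarrow> 'L"
    and br :: "'L \<Rightarrow> 'L \<Rightarrow> 'L"
    and \<Delta> :: "'r::euclidean_space set"
    and n :: nat
    and G :: "'r \<Rightarrow> (nat \<Rightarrow> int) \<Rightarrow> 'L set"
  assumes "lie_torus smul br \<Delta> n G"
    and "fgc smul br"
    and "centreless br"
  shows "maximal_split_toral smul br (G 0 0)"
proof -
  interpret lie_torus_struct smul br \<Delta> n G by unfold_locales (rule assms(1))
  show ?thesis
    unfolding maximal_split_toral_def
    using split_toral_G00 split_toral_containing_G00_subset[OF assms(2,3)] by blast
qed

end
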